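(* Let $\mathsf{S}$ be a kinematic system and $\mathbf{u}:X\to\mathbb{R}^n$ be of PIK form, $\mathbf{u}=\mathbf{R}^{-1}\hat{\mathbf{J}}^T\mathbf{C}_D^T\mathbf{L}\mathbf{r}'$, for a block lower triangular $\mathbf{L}:X\to\mathbb{R}^{m\times m}$. Assume that $\mathbf{r}'$ is linearly bounded, i.e. there exist $\gamma,c\in[0,\infty)$ with $\|\mathbf{r}'(t,\mathbf{q})\|\le\gamma\|\mathbf{q}\|+c$ for all $(t,\mathbf{q})\in X$, and that $\mathbf{F}_q$, $\mathbf{R}^{-1}$ and $\mathbf{L}$ are bounded on $X$. Then for every $(t_0,\mathbf{q}_0)\in X$ there exists a Krasovskii solution $\mathbf{q}:[t_0,\infty)\to\mathbb{R}^n$ of $\dot{\mathbf{q}}=\mathbf{u}(t,\mathbf{q})$ with $\mathbf{q}(t_0)=\mathbf{q}_0$.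
   Context: Kinematic system: integers $l\ge2$, $m_1,\dots,m_l\ge1$, $m=m_1+\dots+m_l\le n$; $X=\mathbb{R}\times\mathbb{R}^n$ with points $\mathbf{x}=(t,\mathbf{q})$; maps $\mathbf{F}=[\mathbf{f}_t\ \mathbf{F}_q]:X\to\mathbb{R}^{m\times(n+1)}$ ($\mathbf{f}_t:X\to\mathbb{R}^m$, $\mathbf{F}_q:X\to\mathbb{R}^{m\times n}$), $\mathbf{R}:X\to\{$invertible $n\times n$ matrices$\}$, $\mathbf{r}:X\to\mathbb{R}^m$; row blocks of sizes $m_1,\dots,m_l$ are indexed by tasks $a=1,\dots,l$ (e.g. $\mathbf{r}=(\mathbf{r}_1,\dots,\mathbf{r}_l)$). Put $\mathbf{r}'=\mathbf{r}-\mathbf{f}_t$ and $\mathbf{J}=\mathbf{F}_q\mathbf{R}^{-1}$. Orthogonalization: at each $\mathbf{x}$, with rows $\mathbf{j}_i$ of $\mathbf{J}(\mathbf{x})$, for $i=1,\dots,m$ put $\mathbf{v}_i=\mathbf{j}_i-\sum_{k<i,c_{kk}>0}\langle\hat{\mathbf{j}}_k,\mathbf{j}_i\rangle\hat{\mathbf{j}}_k$, $c_{ii}=\|\mathbf{v}_i\|$, $\hat{\mathbf{j}}_i=\mathbf{v}_i/c_{ii}$ if $c_{ii}>0$, $c_{ik}=\langle\hat{\mathbf{j}}_k,\mathbf{j}_i\rangle$ for $k<i$, $c_{kk}>0$, and $c_{ik}=0$ otherwise; remaining rows $\hat{\mathbf{j}}_i$ (those with $c_{ii}=0$ and $i>m$)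 form an orthonormal basis of the null space of $\mathbf{J}(\mathbf{x})$, giving an orthogonal $\hat{\mathbf{J}}_e$ with $\mathbf{J}=\mathbf{C}_e\hat{\mathbf{J}}_e$. $\mathbf{C}=[c_{ik}]_{i,k\le m}$ is partitioned into blocks $\mathbf{C}_{ab}\in\mathbb{R}^{m_a\times m_b}$, $\mathbf{C}_D=\mathrm{diag}(\mathbf{C}_{11},\dots,\mathbf{C}_{ll})$; $\hat{\mathbf{J}}$ is the top $m\times n$ block of $\hat{\mathbf{J}}_e$. PIK form: $\mathbf{L}=[\mathbf{L}_{ab}]$ with $\mathbf{L}_{ab}:X\to\mathbb{R}^{m_a\times m_b}$, $\mathbf{L}_{ab}=\mathbf{0}$ for $b>a$. Krasovskii solution: with $U(\mathbf{x})=\bigcap_{\delta>0}\overline{\mathrm{co}}\,\mathbf{u}(\mathbf{x}+\delta B_{n+1})$ ($\overline{\mathrm{co}}$ = closed convex hull, $B_{n+1}$ closed unit ball of $X$), a function $\mathbf{q}$ that is absolutely continuous on every compact subinterval of $[t_0,\infty)$, satisfies $\mathbf{q}(t_0)=\mathbf{q}_0$ and $\dot{\mathbf{q}}(t)\in U(t,\mathbf{q}(t))$ for almost every $t>t_0$. *)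

theory Defs
  imports "HOL-Analysis.Analysis"
begin

definition abs_cont_on :: "real \<Rightarrow> real \<Rightarrow> (real \<Rightarrow> 'a::real_normed_vector) \<Rightarrow> bool" where
  "abs_cont_on a b f \<longleftrightarrow>
     (\<forall>\<epsilon>>0. \<exists>\<delta>>0. \<forall>(N::nat) (s::nat \<Rightarrow> real) (e::nat \<Rightarrow> real).
        (\<forall>k<N. s k \<le> e k \<and> {s k..e k} \<subseteq> {a..b}) \<and>
        (\<forall>k<N. \<forall>k'<N. k \<noteq> k' \<longrightarrow> {s k<..<e k} \<inter> {s k'<..<e k'} = {}) \<and>
        (\<Sum>k<N. e k - s k) < \<delta>
        \<longrightarrow> (\<Sum>k<N. norm (f (e k) - f (s k))) < \<epsilon>)"

definition krasovskii_set :: "('x::real_normed_vector \<Rightarrow> 'b::real_normed_vector) \<Rightarrow> 'x \<Rightarrow> 'b set" where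
  "krasovskii_set u x = (\<Inter>\<delta>\<in>{0<..}. closure (convex hull (u ` cball x \<delta>)))"

definition krasovskii_solution ::
  "(real \<times> 'n::euclidean_space \<Rightarrow> 'n) \<Rightarrow> real \<Rightarrow> 'n \<Rightarrow> (real \<Rightarrow> 'n) \<Rightarrow> bool" where
  "krasovskii_solution u t0 q0 q \<longleftrightarrow>
     (\<forall>a b. t0 \<le> a \<and> a \<le> b \<longrightarrow> abs_cont_on a b q) \<and>
     q t0 = q0 \<and>
     (\<exists>N. N \<in> null_sets lebesgue \<and>
        (\<forall>t. t > t0 \<and> t \<notin> N \<longrightarrow>
           (\<exists>d. (q has_vector_derivative d) (at t) \<and> d \<in> krasovskii_set u (t, q t))))"

text \<open>Task sizes ms = [m_1,...,m_l]; row index i < m belongs to task blk ms i (0-based).\<close>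
definition blk :: "nat list \<Rightarrow> nat \<Rightarrow> nat" where
  "blk ms i = (LEAST a. i < sum_list (take (Suc a) ms))"

text \<open>Rows j i (i < m). The list gs_rows j i contains the normalized vectors
  \<open>hat j_0, ..., hat j_(i-1)\<close>, where a row with c_kk = 0 is recorded as 0
  (such rows never contribute).\<close>
primrec gs_rows :: "(nat \<Rightarrow> 'n::euclidean_space) \<Rightarrow> nat \<Rightarrow> 'n list" where
  "gs_rows j 0 = []"
| "gs_rows j (Suc i) =
     (let hs = gs_rows j i;
          v = j i - sum_list (map (\<lambda>h. (h \<bullet> j i) *\<^sub>R h) hs)
      in hs @ [if norm v > 0 then v /\<^sub>R norm v else 0])"

definition gs_hat :: "(nat \<Rightarrow> 'n::euclidean_space) \<Rightarrow> nat \<Rightarrow> 'n" where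
  "gs_hat j i = gs_rows j (Suc i) ! i"

definition gs_v :: "(nat \<Rightarrow> 'n::euclidean_space) \<Rightarrow> nat \<Rightarrow> 'n" where
  "gs_v j i = j i - (\<Sum>k<i. (gs_hat j k \<bullet> j i) *\<^sub>R gs_hat j k)"

definition gs_c :: "(nat \<Rightarrow> 'n::euclidean_space) \<Rightarrow> nat \<Rightarrow> nat \<Rightarrow> real" where
  "gs_c j i k =
     (if k = i then norm (gs_v j i)
      else if k < i \<and> norm (gs_v j k) > 0 then gs_hat j k \<bullet> j i
      else 0)"

definition gs_cD :: "nat list \<Rightarrow> (nat \<Rightarrow> 'n::euclidean_space) \<Rightarrow> nat \<Rightarrow> nat \<Rightarrow> real" where
  "gs_cD ms j i k = (if blk ms i = blk ms k then gs_c j i k else 0)"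

text \<open>Fq x i is the i-th row of F_q(x); J = F_q R^{-1}, row-wise.\<close>
definition Jrows :: "(real \<times> (real^'n) \<Rightarrow> nat \<Rightarrow> real^'n) \<Rightarrow> (real \<times> (real^'n) \<Rightarrow> real^'n^'n)
                      \<Rightarrow> real \<times> (real^'n) \<Rightarrow> nat \<Rightarrow> real^'n" where
  "Jrows Fq R x i = Fq x i v* matrix_inv (R x)"

text \<open>u = R^{-1} hat J^T C_D^T L r' with r' = r - f_t.\<close>
definition pik_u ::
  "nat list \<Rightarrow> (real \<times> (real^'n) \<Rightarrow> nat \<Rightarrow> real) \<Rightarrow> (real \<times> (real^'n) \<Rightarrow> nat \<Rightarrow> real^'n)
   \<Rightarrow> (real \<times> (real^'n) \<Rightarrow> real^'n^'n) \<Rightarrow> (real \<times> (real^'n) \<Rightarrow> nat \<Rightarrow> real)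
   \<Rightarrow> (real \<times> (real^'n) \<Rightarrow> nat \<Rightarrow> nat \<Rightarrow> real) \<Rightarrow> real \<times> (real^'n) \<Rightarrow> real^'n" where
  "pik_u ms ft Fq R r L x =
     (let m = sum_list ms;
          j = Jrows Fq R x;
          r' = (\<lambda>i. r x i - ft x i);
          w = (\<lambda>i. \<Sum>k<m. L x i k * r' k);
          z = (\<lambda>k. \<Sum>i<m. gs_cD ms j i k * w i)
      in matrix_inv (R x) *v (\<Sum>k<m. z k *\<^sub>R gs_hat j k))"

end

theory Submission
  imports Defs "HOL-Library.Diagonal_Subsequence"
begin

text \<open>Existence only uses that the PIK controller grows at most linearly, which follows from the
  bounds on \<open>F\<^sub>q\<close>, \<open>R\<^sup>-\<^sup>1\<close>, \<open>L\<close> and \<open>r'\<close> because the Gram--Schmidt coefficients are bounded by the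
  norms of the rows of \<open>J\<close>. For a linearly growing right-hand side the Euler polygons with steps
  \<open>1/(k+1)\<close> are Lipschitz on every \<open>[t\<^sub>0, T]\<close> uniformly in \<open>k\<close>, so a diagonal subsequence converges
  pointwise on \<open>[t\<^sub>0, \<infinity>)\<close> to a locally Lipschitz \<open>f\<close>. Such an \<open>f\<close> is absolutely continuous and, by
  Lebesgue's differentiation theorem for monotone functions (via Vitali coverings and Dini
  derivatives), differentiable almost everywhere. A difference quotient of a polygon over
  \<open>[t, t + \<tau>]\<close> is an average of values of \<open>u\<close> near \<open>(t, f t)\<close>, hence lies in the closed convex hull
  of \<open>u\<close> on a small ball; letting first the step and then \<open>\<tau>\<close> tend to zero puts \<open>f' t\<close> into
  every such hull, that is, into the Krasovskii set.\<close>

section \<open>Dini derivatives of monotone functions\<close>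

lemma emeasure_countable_disjoint_UN_compare:
  fixes \<mu> \<nu> :: "'a measure" and B :: "'i \<Rightarrow> 'a set" and a b :: ennreal
  assumes sets: "sets \<mu> = sets \<nu>" and C: "countable C" "disjoint_family_on B C"
    and B: "\<And>i. i \<in> C \<Longrightarrow> B i \<in> sets \<mu>"
    and le: "\<And>i. i \<in> C \<Longrightarrow> a * emeasure \<mu> (B i) \<le> b * emeasure \<nu> (B i)"
  shows "a * emeasure \<mu> (\<Union>(B ` C)) \<le> b * emeasure \<nu> (\<Union>(B ` C))"
proof -
  have "a * emeasure \<mu> (\<Union>(B ` C)) = (\<integral>\<^sup>+ i. a * emeasure \<mu> (B i) \<partial>count_space C)"
    using C B by (simp add: emeasure_UN_countable nn_integral_cmult)
  also have "\<dots> \<le> (\<integral>\<^sup>+ i. b * emeasure \<nu> (B i) \<partial>count_space C)"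
    by (rule nn_integral_mono) (use le in auto)
  also have "\<dots> = b * emeasure \<nu> (\<Union>(B ` C))"
    using C B sets by (simp add: emeasure_UN_countable nn_integral_cmult)
  finally show ?thesis .
qed

lemma Vitali_cover_compare_measures:
  fixes \<mu> \<nu> :: "'n::euclidean_space measure" and a b :: ennreal
  assumes sets: "sets \<mu> = sets borel" "sets \<nu> = sets borel"
    and fine: "\<And>x \<delta>. x \<in> S \<Longrightarrow> 0 < \<delta> \<Longrightarrow> \<exists>c \<rho>. P c \<rho> \<and> 0 < \<rho> \<and> \<rho> < \<delta> \<and> x \<in> cball c \<rho>"
    and compare: "\<And>c \<rho>. P c \<rho> \<Longrightarrow> 0 < \<rho> \<Longrightarrow> a * emeasure \<mu> (cball c \<rho>) \<le> b * emeasure \<nu> (cball c \<rho>)"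
  obtains C where "countable C" "\<And>c \<rho>. (c, \<rho>) \<in> C \<Longrightarrow> P c \<rho> \<and> 0 < \<rho>"
    "negligible (S - (\<Union>(c, \<rho>)\<in>C. cball c \<rho>))"
    "a * emeasure \<mu> (\<Union>(c, \<rho>)\<in>C. cball c \<rho>) \<le> b * emeasure \<nu> (\<Union>(c, \<rho>)\<in>C. cball c \<rho>)"
proof -
  obtain C where C: "countable C" "C \<subseteq> {(c, \<rho>). P c \<rho> \<and> 0 < \<rho>}"
    "pairwise (\<lambda>i j. disjnt (cball (fst i) (snd i)) (cball (fst j) (snd j))) C"
    "negligible (S - (\<Union>i\<in>C. cball (fst i) (snd i)))"
    by (rule Vitali_covering_theorem_cballs[of "{(c, \<rho>). P c \<rho> \<and> 0 < \<rho>}" snd S fst])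
       (use fine in force)+
  have "a * emeasure \<mu> (\<Union>i\<in>C. cball (fst i) (snd i)) \<le> b * emeasure \<nu> (\<Union>i\<in>C. cball (fst i) (snd i))"
  proof (rule emeasure_countable_disjoint_UN_compare)
    show "disjoint_family_on (\<lambda>i. cball (fst i) (snd i)) C"
      using C(3) by (auto simp: disjoint_family_on_def pairwise_def disjnt_def)
    fix i assume "i \<in> C"
    then show "a * emeasure \<mu> (cball (fst i) (snd i)) \<le> b * emeasure \<nu> (cball (fst i) (snd i))"
      using C(2) compare[of "fst i" "snd i"] by (auto simp: case_prod_beta)
  qed (use C(1) sets in auto)
  with C show thesis
    by (intro that[of C]) (auto simp: case_prod_beta')
qed

lemma lmeasurable_open_superset:
  assumes "U \<in> lmeasurable" "0 < \<epsilon>"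
  obtains G where "open G" "U \<subseteq> G" "G \<in> lmeasurable" "measure lebesgue G < measure lebesgue U + \<epsilon>"
proof -
  obtain G where G: "open G" "U \<subseteq> G" "G - U \<in> lmeasurable" "emeasure lebesgue (G - U) < ennreal \<epsilon>"
    using sets_lebesgue_outer_open[of U \<epsilon>] assms by (auto simp: fmeasurable_def)
  have "G = U \<union> (G - U)" using G by blast
  then have "G \<in> lmeasurable" using G assms by (metis fmeasurable.Un)
  have "measure lebesgue G \<le> measure lebesgue U + measure lebesgue (G - U)"
    using \<open>G = U \<union> (G - U)\<close> assms G by (metis fmeasurableD measure_Un_le)
  moreover have "measure lebesgue (G - U) < \<epsilon>"
    using G(3,4) \<open>0 < \<epsilon>\<close> by (simp add: emeasure_eq_measure2 ennreal_less_iff)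
  ultimately show thesis by (intro that[OF \<open>open G\<close> \<open>U \<subseteq> G\<close> \<open>G \<in> lmeasurable\<close>]) linarith
qed

lemma negligible_if_outer_contraction:
  fixes S :: "'a::euclidean_space set"
  assumes "bounded S" "0 \<le> p" "p < r"
    and contract: "\<And>G. open G \<Longrightarrow> S \<subseteq> G \<Longrightarrow> G \<in> lmeasurable \<Longrightarrow>
      \<exists>U. S \<subseteq> U \<and> U \<in> lmeasurable \<and> r * measure lebesgue U \<le> p * measure lebesgue G"
  shows "negligible S"
proof -
  \<comment> \<open>\<open>\<mu>\<close> is the outer Lebesgue measure of \<open>S\<close>; the contraction forces \<open>r * \<mu> \<le> p * \<mu>\<close>.\<close>
  define M where "M = {measure lebesgue U | U. S \<subseteq> U \<and> U \<in> lmeasurable}"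
  define \<mu> where "\<mu> = Inf M"
  obtain R where "S \<subseteq> ball 0 R" using bounded_subset_ballD[OF \<open>bounded S\<close>] by blast
  then have "M \<noteq> {}" using lmeasurable_ball unfolding M_def by blast
  have bdd: "bdd_below M" unfolding M_def by (rule bdd_belowI[of _ 0]) auto
  have \<mu>_le: "\<mu> \<le> measure lebesgue U" if "S \<subseteq> U" "U \<in> lmeasurable" for U
    unfolding \<mu>_def by (rule cInf_lower) (use that bdd in \<open>auto simp: M_def\<close>)
  have "0 \<le> \<mu>" unfolding \<mu>_def by (rule cInf_greatest[OF \<open>M \<noteq> {}\<close>]) (auto simp: M_def)
  have contract_\<mu>: "r * \<mu> \<le> p * \<mu> + e" if "0 < e" for e
  proof -
    define \<epsilon> where "\<epsilon> = e / (p + 1)"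
    have "0 < \<epsilon>" using that \<open>0 \<le> p\<close> by (simp add: \<epsilon>_def)
    obtain U0 where U0: "S \<subseteq> U0" "U0 \<in> lmeasurable" "measure lebesgue U0 < \<mu> + \<epsilon>/2"
      using cInf_lessD[OF \<open>M \<noteq> {}\<close>, of "\<mu> + \<epsilon>/2"] \<open>0 < \<epsilon>\<close> unfolding \<mu>_def M_def by auto
    obtain G where G: "open G" "U0 \<subseteq> G" "G \<in> lmeasurable" "measure lebesgue G < measure lebesgue U0 + \<epsilon>/2"
      using lmeasurable_open_superset[OF U0(2), of "\<epsilon>/2"] \<open>0 < \<epsilon>\<close> by auto
    obtain U where U: "S \<subseteq> U" "U \<in> lmeasurable" "r * measure lebesgue U \<le> p * measure lebesgue G"
      using contract[OF \<open>open G\<close> _ \<open>G \<in> lmeasurable\<close>] U0 G by blast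
    have "measure lebesgue G \<le> \<mu> + \<epsilon>" using G(4) U0(3) by linarith
    have "r * \<mu> \<le> r * measure lebesgue U"
      using \<mu>_le[OF U(1,2)] assms by (simp add: mult_left_mono)
    also have "\<dots> \<le> p * measure lebesgue G" by (fact U(3))
    also have "\<dots> \<le> p * (\<mu> + \<epsilon>)"
      using \<open>measure lebesgue G \<le> \<mu> + \<epsilon>\<close> \<open>0 \<le> p\<close> by (rule mult_left_mono)
    also have "\<dots> \<le> p * \<mu> + e" using that \<open>0 \<le> p\<close> by (simp add: \<epsilon>_def field_simps)
    finally show ?thesis .
  qed
  then have "(r - p) * \<mu> \<le> 0" by (simp add: field_le_epsilon algebra_simps)
  then have "\<mu> = 0" using \<open>0 \<le> \<mu>\<close> \<open>p < r\<close> by (simp add: mult_le_0_iff)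
  show ?thesis
    unfolding negligible_outer
  proof (intro allI impI)
    fix e :: real assume "0 < e"
    then show "\<exists>T. S \<subseteq> T \<and> T \<in> lmeasurable \<and> measure lebesgue T < e"
      using cInf_lessD[OF \<open>M \<noteq> {}\<close>, of e] \<open>\<mu> = 0\<close> unfolding \<mu>_def M_def by auto
  qed
qed

text \<open>At a point of \<open>dini_gap g p r\<close> arbitrarily short left difference quotients of \<open>g\<close> lie below \<open>p\<close>
  and arbitrarily short right ones above \<open>r\<close>: the lower left Dini derivative is at most \<open>p\<close>, the
  upper right one at least \<open>r\<close>.\<close>
definition dini_gap :: "(real \<Rightarrow> real) \<Rightarrow> real \<Rightarrow> real \<Rightarrow> real set" where
  "dini_gap g p r = {x. (\<exists>\<^sub>F h in at_right 0. (g x - g (x - h)) / h < p) \<and>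
                        (\<exists>\<^sub>F h in at_right 0. r < (g (x + h) - g x) / h)}"

lemma frequently_at_right_0_small:
  assumes "\<exists>\<^sub>F h in at_right (0::real). P h" "0 < \<delta>"
  obtains h where "0 < h" "h < \<delta>" "P h"
  using assms by (auto simp: frequently_def eventually_at_right_field)

lemma frequently_at_right_0_small_cballs:
  assumes "\<exists>\<^sub>F h in at_right (0::real). P h" "0 < \<delta>" "open G" "x \<in> G"
  obtains h where "0 < h" "h < \<delta>" "P h" "cball (x - h/2) (h/2) \<subseteq> G" "cball (x + h/2) (h/2) \<subseteq> G"
proof -
  obtain e where "0 < e" "ball x e \<subseteq> G" using assms(3,4) open_contains_ball by blast
  obtain h where h: "0 < h" "h < min \<delta> e" "P h"
    using frequently_at_right_0_small[OF assms(1)] \<open>0 < \<delta>\<close> \<open>0 < e\<close> by (metis min_less_iff_conj)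
  have "cball (x - h/2) (h/2) \<subseteq> ball x e" "cball (x + h/2) (h/2) \<subseteq> ball x e"
    using h by (auto simp: cball_eq_atLeastAtMost dist_real_def)
  with h \<open>ball x e \<subseteq> G\<close> show thesis by (intro that) auto
qed

lemma emeasure_interval_measure_cball:
  fixes g :: "real \<Rightarrow> real"
  assumes "mono g" "continuous_on UNIV g" "0 \<le> \<rho>"
  shows "emeasure (interval_measure g) (cball c \<rho>) = ennreal (g (c + \<rho>) - g (c - \<rho>))"
  using emeasure_interval_measure_Icc[of "c - \<rho>" "c + \<rho>" g] assms
  by (simp add: cball_eq_atLeastAtMost monoD)

lemma emeasure_lborel_cball_real: "0 \<le> \<rho> \<Longrightarrow> emeasure lborel (cball (c::real) \<rho>) = ennreal (2 * \<rho>)"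
  by (simp add: cball_eq_atLeastAtMost)

lemma Vitali_cover_dini_left:
  fixes g :: "real \<Rightarrow> real"
  assumes g: "mono g" "continuous_on UNIV g" and "0 \<le> p" "open G" "S \<subseteq> G"
    and left: "\<And>x. x \<in> S \<Longrightarrow> \<exists>\<^sub>F h in at_right 0. (g x - g (x - h)) / h < p"
  obtains C where "countable C" "\<And>c \<rho>. (c, \<rho>) \<in> C \<Longrightarrow> 0 < \<rho> \<and> cball c \<rho> \<subseteq> G"
    "negligible (S - (\<Union>(c, \<rho>)\<in>C. cball c \<rho>))"
    "emeasure (interval_measure g) (\<Union>(c, \<rho>)\<in>C. cball c \<rho>) \<le> p * emeasure lborel (\<Union>(c, \<rho>)\<in>C. cball c \<rho>)"
proof (rule Vitali_cover_compare_measures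
    [of "interval_measure g" lborel S "\<lambda>c \<rho>. cball c \<rho> \<subseteq> G \<and> g (c + \<rho>) - g (c - \<rho>) \<le> p * (2 * \<rho>)" 1 p])
  fix x \<delta> :: real assume "x \<in> S" "0 < \<delta>"
  then have "x \<in> G" using \<open>S \<subseteq> G\<close> by blast
  obtain h where "0 < h" "h < \<delta>" "(g x - g (x - h)) / h < p" "cball (x - h/2) (h/2) \<subseteq> G"
    by (rule frequently_at_right_0_small_cballs[OF left[OF \<open>x \<in> S\<close>] \<open>0 < \<delta>\<close> \<open>open G\<close> \<open>x \<in> G\<close>])
  then show "\<exists>c \<rho>. (cball c \<rho> \<subseteq> G \<and> g (c + \<rho>) - g (c - \<rho>) \<le> p * (2 * \<rho>)) \<and> 0 < \<rho> \<and> \<rho> < \<delta> \<and> x \<in> cball c \<rho>"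
  proof (intro exI conjI)
    show "g (x - h/2 + h/2) - g (x - h/2 - h/2) \<le> p * (2 * (h/2))"
      using \<open>0 < h\<close> \<open>(g x - g (x - h)) / h < p\<close> by (simp add: pos_divide_less_eq mult.commute)
    show "x \<in> cball (x - h/2) (h/2)" using \<open>0 < h\<close> by (simp add: dist_real_def)
  qed (use \<open>0 < h\<close> \<open>h < \<delta>\<close> \<open>cball (x - h/2) (h/2) \<subseteq> G\<close> in auto)
next
  fix c \<rho> :: real assume "cball c \<rho> \<subseteq> G \<and> g (c + \<rho>) - g (c - \<rho>) \<le> p * (2 * \<rho>)" "0 < \<rho>"
  then show "1 * emeasure (interval_measure g) (cball c \<rho>) \<le> ennreal p * emeasure lborel (cball c \<rho>)"
    using \<open>0 \<le> p\<close> by (simp add: emeasure_interval_measure_cball[OF g] emeasure_lborel_cball_real ennreal_mult[symmetric] ennreal_leI)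
qed (fact that | simp)+

lemma Vitali_cover_dini_right:
  fixes g :: "real \<Rightarrow> real"
  assumes g: "mono g" "continuous_on UNIV g" and "0 \<le> r" "open G" "S \<subseteq> G"
    and right: "\<And>x. x \<in> S \<Longrightarrow> \<exists>\<^sub>F h in at_right 0. r < (g (x + h) - g x) / h"
  obtains C where "countable C" "\<And>c \<rho>. (c, \<rho>) \<in> C \<Longrightarrow> 0 < \<rho> \<and> cball c \<rho> \<subseteq> G"
    "negligible (S - (\<Union>(c, \<rho>)\<in>C. cball c \<rho>))"
    "r * emeasure lborel (\<Union>(c, \<rho>)\<in>C. cball c \<rho>) \<le> emeasure (interval_measure g) (\<Union>(c, \<rho>)\<in>C. cball c \<rho>)"
proof (rule Vitali_cover_compare_measures
    [of lborel "interval_measure g" S "\<lambda>c \<rho>. cball c \<rho> \<subseteq> G \<and> r * (2 * \<rho>) \<le> g (c + \<rho>) - g (c - \<rho>)" r 1])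
  fix x \<delta> :: real assume "x \<in> S" "0 < \<delta>"
  then have "x \<in> G" using \<open>S \<subseteq> G\<close> by blast
  obtain h where "0 < h" "h < \<delta>" "r < (g (x + h) - g x) / h" "cball (x + h/2) (h/2) \<subseteq> G"
    by (rule frequently_at_right_0_small_cballs[OF right[OF \<open>x \<in> S\<close>] \<open>0 < \<delta>\<close> \<open>open G\<close> \<open>x \<in> G\<close>])
  then show "\<exists>c \<rho>. (cball c \<rho> \<subseteq> G \<and> r * (2 * \<rho>) \<le> g (c + \<rho>) - g (c - \<rho>)) \<and> 0 < \<rho> \<and> \<rho> < \<delta> \<and> x \<in> cball c \<rho>"
  proof (intro exI conjI)
    show "r * (2 * (h/2)) \<le> g (x + h/2 + h/2) - g (x + h/2 - h/2)"
      using \<open>0 < h\<close> \<open>r < (g (x + h) - g x) / h\<close> by (simp add: pos_less_divide_eq add.commute)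
    show "x \<in> cball (x + h/2) (h/2)" using \<open>0 < h\<close> by (simp add: dist_real_def)
  qed (use \<open>0 < h\<close> \<open>h < \<delta>\<close> \<open>cball (x + h/2) (h/2) \<subseteq> G\<close> in auto)
next
  fix c \<rho> :: real assume "cball c \<rho> \<subseteq> G \<and> r * (2 * \<rho>) \<le> g (c + \<rho>) - g (c - \<rho>)" "0 < \<rho>"
  then show "ennreal r * emeasure lborel (cball c \<rho>) \<le> 1 * emeasure (interval_measure g) (cball c \<rho>)"
    using \<open>0 \<le> r\<close> by (simp add: emeasure_interval_measure_cball[OF g] emeasure_lborel_cball_real ennreal_mult[symmetric] ennreal_leI)
qed (fact that | simp)+

lemma negligible_countable_real: "countable (A :: real set) \<Longrightarrow> negligible A"
  by (simp add: negligible_iff_null_sets null_sets_completionI countable_imp_null_set_lborel)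

lemma emeasure_lborel_eq_measure:
  assumes "A \<in> sets borel" "A \<in> lmeasurable"
  shows "emeasure lborel A = ennreal (measure lebesgue A)"
proof -
  have "emeasure lebesgue A = emeasure lborel A" using assms(1) by simp
  then show ?thesis using assms(2) by (simp add: emeasure_eq_measure2)
qed

lemma dini_gap_cover:
  fixes g :: "real \<Rightarrow> real"
  assumes g: "mono g" "continuous_on UNIV g" and "0 \<le> p" "p < r" "open G" "S \<subseteq> G"
    and "S \<subseteq> dini_gap g p r"
  obtains I where "I \<in> sets borel" "I \<subseteq> G" "negligible (S - I)"
    "r * emeasure lborel I \<le> p * emeasure lborel G"
proof -
  let ?\<nu> = "interval_measure g"
  obtain C1 where C1: "countable C1" "\<And>c \<rho>. (c, \<rho>) \<in> C1 \<Longrightarrow> 0 < \<rho> \<and> cball c \<rho> \<subseteq> G"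
      "negligible (S - (\<Union>(c, \<rho>)\<in>C1. cball c \<rho>))"
      "emeasure ?\<nu> (\<Union>(c, \<rho>)\<in>C1. cball c \<rho>) \<le> p * emeasure lborel (\<Union>(c, \<rho>)\<in>C1. cball c \<rho>)"
    by (rule Vitali_cover_dini_left[OF g \<open>0 \<le> p\<close> \<open>open G\<close> \<open>S \<subseteq> G\<close>])
       (use \<open>S \<subseteq> dini_gap g p r\<close> in \<open>auto simp: dini_gap_def\<close>)
  define I1 where "I1 = (\<Union>(c, \<rho>)\<in>C1. cball c \<rho>)"
  define W where "W = (\<Union>(c, \<rho>)\<in>C1. ball c \<rho>)"
  have "open W" "W \<subseteq> I1" unfolding W_def I1_def by auto
  obtain C2 where C2: "countable C2" "\<And>c \<rho>. (c, \<rho>) \<in> C2 \<Longrightarrow> 0 < \<rho> \<and> cball c \<rho> \<subseteq> W"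
      "negligible (S \<inter> W - (\<Union>(c, \<rho>)\<in>C2. cball c \<rho>))"
      "r * emeasure lborel (\<Union>(c, \<rho>)\<in>C2. cball c \<rho>) \<le> emeasure ?\<nu> (\<Union>(c, \<rho>)\<in>C2. cball c \<rho>)"
    by (rule Vitali_cover_dini_right[OF g _ \<open>open W\<close>, of r "S \<inter> W"])
       (use \<open>0 \<le> p\<close> \<open>p < r\<close> \<open>S \<subseteq> dini_gap g p r\<close> in \<open>auto simp: dini_gap_def\<close>)
  define I2 where "I2 = (\<Union>(c, \<rho>)\<in>C2. cball c \<rho>)"
  have sets: "I1 \<in> sets borel" "I2 \<in> sets borel"
    unfolding I1_def I2_def using C1(1) C2(1) by (auto intro!: sets.countable_UN'')
  have "I2 \<subseteq> W" "I1 \<subseteq> G" using C1(2) C2(2) unfolding I1_def I2_def by fast+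
  have "I1 - W \<subseteq> (\<lambda>(c, \<rho>). c - \<rho>) ` C1 \<union> (\<lambda>(c, \<rho>). c + \<rho>) ` C1"
    unfolding I1_def W_def by (force simp: dist_real_def)
  then have "negligible (I1 - W)"
    by (meson C1(1) countable_Un countable_image countable_subset negligible_countable_real)
  moreover have "negligible (S - I1)" "negligible (S \<inter> W - I2)" using C1(3) C2(3) unfolding I1_def I2_def .
  ultimately have "negligible ((S - I1) \<union> (I1 - W) \<union> (S \<inter> W - I2))" by simp
  then have "negligible (S - I2)" by (rule negligible_subset) blast
  have "r * emeasure lborel I2 \<le> emeasure ?\<nu> I2" using C2(4) unfolding I2_def .
  also have "\<dots> \<le> emeasure ?\<nu> I1" using sets \<open>I2 \<subseteq> W\<close> \<open>W \<subseteq> I1\<close> by (intro emeasure_mono) auto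
  also have "\<dots> \<le> p * emeasure lborel I1" using C1(4) unfolding I1_def .
  also have "\<dots> \<le> p * emeasure lborel G"
    using \<open>I1 \<subseteq> G\<close> \<open>open G\<close> by (intro mult_left_mono emeasure_mono) auto
  finally have "r * emeasure lborel I2 \<le> p * emeasure lborel G" .
  moreover have "I2 \<subseteq> G" using \<open>I2 \<subseteq> W\<close> \<open>W \<subseteq> I1\<close> \<open>I1 \<subseteq> G\<close> by blast
  ultimately show thesis by (intro that[OF sets(2) _ \<open>negligible (S - I2)\<close>])
qed

lemma negligible_dini_gap:
  fixes g :: "real \<Rightarrow> real"
  assumes g: "mono g" "continuous_on UNIV g" and "0 \<le> p" "p < r"
  shows "negligible (dini_gap g p r)"
proof -
  have "negligible (dini_gap g p r \<inter> ball 0 n)" for n :: nat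
  proof (rule negligible_if_outer_contraction[OF _ \<open>0 \<le> p\<close> \<open>p < r\<close>])
    define S where "S = dini_gap g p r \<inter> ball 0 n"
    show "bounded S" unfolding S_def by (simp add: bounded_Int)
    fix G assume G: "open G" "S \<subseteq> G" "G \<in> lmeasurable"
    obtain I where I: "I \<in> sets borel" "I \<subseteq> G" "negligible (S - I)"
      "r * emeasure lborel I \<le> p * emeasure lborel G"
      by (rule dini_gap_cover[OF g \<open>0 \<le> p\<close> \<open>p < r\<close> G(1,2)]) (auto simp: S_def)
    have "I \<in> lmeasurable" using I(1,2) G(3) by (intro fmeasurableI2[OF G(3)]) auto
    have "ennreal (r * measure lebesgue I) = r * emeasure lborel I"
      using emeasure_lborel_eq_measure[OF I(1) \<open>I \<in> lmeasurable\<close>] \<open>p < r\<close> \<open>0 \<le> p\<close> by (simp add: ennreal_mult)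
    also have "\<dots> \<le> ennreal (p * measure lebesgue G)"
      using I(4) emeasure_lborel_eq_measure[OF borel_open[OF \<open>open G\<close>] G(3)] \<open>0 \<le> p\<close>
      by (simp add: ennreal_mult)
    finally have "r * measure lebesgue I \<le> p * measure lebesgue G"
      using \<open>0 \<le> p\<close> by (simp add: ennreal_le_iff)
    have "S - I \<in> lmeasurable" "measure lebesgue (S - I) = 0"
      using \<open>negligible (S - I)\<close> by (simp_all add: negligible_imp_measurable negligible_imp_measure0)
    then have U: "I \<union> (S - I) \<in> lmeasurable" "measure lebesgue (I \<union> (S - I)) \<le> measure lebesgue I"
      using \<open>I \<in> lmeasurable\<close> measure_Un_le[of I lebesgue "S - I"] by (auto simp del: Un_Diff_cancel)
    have "r * measure lebesgue (I \<union> (S - I)) \<le> r * measure lebesgue I"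
      using U(2) \<open>0 \<le> p\<close> \<open>p < r\<close> by (intro mult_left_mono) auto
    with U(1) \<open>r * measure lebesgue I \<le> p * measure lebesgue G\<close>
    show "\<exists>U. S \<subseteq> U \<and> U \<in> lmeasurable \<and> r * measure lebesgue U \<le> p * measure lebesgue G"
      by (intro exI[of _ "I \<union> (S - I)"]) auto
  qed
  moreover have "dini_gap g p r = (\<Union>n. dini_gap g p r \<inter> ball 0 (real n))"
    by (auto simp: dist_real_def intro: reals_Archimedean2)
  ultimately show ?thesis by (metis negligible_Union_nat)
qed

lemma frequently_less_if_Liminf_less:
  fixes f :: "'a \<Rightarrow> 'b::complete_linorder"
  assumes "Liminf F f < c"
  shows "\<exists>\<^sub>F x in F. f x < c"
proof (rule ccontr)
  assume "\<not> (\<exists>\<^sub>F x in F. f x < c)"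
  then have "eventually (\<lambda>x. c \<le> f x) F" by (simp add: not_frequently not_less)
  then have "c \<le> Liminf F f" by (rule Liminf_bounded)
  with assms show False by simp
qed

lemma frequently_greater_if_less_Limsup:
  fixes f :: "'a \<Rightarrow> 'b::complete_linorder"
  assumes "c < Limsup F f"
  shows "\<exists>\<^sub>F x in F. c < f x"
proof (rule ccontr)
  assume "\<not> (\<exists>\<^sub>F x in F. c < f x)"
  then have "eventually (\<lambda>x. f x \<le> c) F" by (simp add: not_frequently not_less)
  then have "Limsup F f \<le> c" by (rule Limsup_bounded)
  with assms show False by simp
qed

lemma Limsup_le_Liminf_if_no_rational_gap:
  fixes f g :: "'a \<Rightarrow> real"
  assumes "\<And>x. 0 \<le> g x"
    and no_gap: "\<And>p r. p \<in> \<rat> \<Longrightarrow> r \<in> \<rat> \<Longrightarrow> 0 \<le> p \<Longrightarrow> p < r \<Longrightarrow>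
      \<not> ((\<exists>\<^sub>F x in F. g x < p) \<and> (\<exists>\<^sub>F x in F. r < f x))"
  shows "Limsup F (\<lambda>x. ereal (f x)) \<le> Liminf F (\<lambda>x. ereal (g x))"
proof (rule ccontr)
  assume "\<not> ?thesis"
  then obtain x y :: real where xy: "Liminf F (\<lambda>x. ereal (g x)) < x" "x < y" "y < Limsup F (\<lambda>x. ereal (f x))"
    by (metis ereal_dense2 ereal_less(2) less_ereal.simps(1) not_le)
  obtain p where p: "p \<in> \<rat>" "x < p" "p < y" using Rats_dense_in_real[OF \<open>x < y\<close>] by blast
  obtain r where r: "r \<in> \<rat>" "p < r" "r < y" using Rats_dense_in_real[OF \<open>p < y\<close>] by blast
  have lim_p: "Liminf F (\<lambda>x. ereal (g x)) < ereal p"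
    using xy(1) p(2) by (metis less_ereal.simps(1) less_trans)
  have r_lim: "ereal r < Limsup F (\<lambda>x. ereal (f x))"
    using xy(3) r(3) by (metis less_ereal.simps(1) less_trans)
  have "0 \<le> Liminf F (\<lambda>x. ereal (g x))" by (rule Liminf_bounded) (simp add: assms(1))
  then have "0 \<le> p" using lim_p by (metis ereal_less_eq(5) le_less_trans less_imp_le)
  have "\<exists>\<^sub>F x in F. g x < p"
    using frequently_less_if_Liminf_less[OF lim_p] by simp
  moreover have "\<exists>\<^sub>F x in F. r < f x"
    using frequently_greater_if_less_Limsup[OF r_lim] by simp
  ultimately show False using no_gap[OF p(1) r(1) \<open>0 \<le> p\<close> r(2)] by blast
qed

lemma tendsto_common_limit_if_crossed_Limsup_le_Liminf:
  fixes f g :: "'a \<Rightarrow> real"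
  assumes "F \<noteq> bot" and bounds: "\<And>x. f x \<in> {a..b}" "\<And>x. g x \<in> {a..b}"
    and fg: "Limsup F (\<lambda>x. ereal (f x)) \<le> Liminf F (\<lambda>x. ereal (g x))"
    and gf: "Limsup F (\<lambda>x. ereal (g x)) \<le> Liminf F (\<lambda>x. ereal (f x))"
  obtains c where "(f \<longlongrightarrow> c) F" "(g \<longlongrightarrow> c) F"
proof -
  define l where "l = Liminf F (\<lambda>x. ereal (f x))"
  have "Liminf F (\<lambda>x. ereal (f x)) \<le> Limsup F (\<lambda>x. ereal (f x))"
    "Liminf F (\<lambda>x. ereal (g x)) \<le> Limsup F (\<lambda>x. ereal (g x))"
    using \<open>F \<noteq> bot\<close> by (simp_all add: Liminf_le_Limsup)
  with fg gf have eq: "Limsup F (\<lambda>x. ereal (f x)) = l" "Liminf F (\<lambda>x. ereal (g x)) = l"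
    "Limsup F (\<lambda>x. ereal (g x)) = l" unfolding l_def by (metis order_antisym order_trans)+
  have "ereal a \<le> l" unfolding l_def by (rule Liminf_bounded) (use bounds in auto)
  moreover have "l \<le> ereal b" unfolding eq(1)[symmetric] by (rule Limsup_bounded) (use bounds in auto)
  ultimately obtain c where c: "l = ereal c" by (cases l) auto
  have "((\<lambda>x. ereal (f x)) \<longlongrightarrow> ereal c) F" "((\<lambda>x. ereal (g x)) \<longlongrightarrow> ereal c) F"
    by (intro Liminf_eq_Limsup; use \<open>F \<noteq> bot\<close> eq c in \<open>simp add: l_def\<close>)+
  then show thesis by (intro that) simp_all
qed

lemma difference_quotient_mono_lipschitz:
  fixes g :: "real \<Rightarrow> real"
  assumes "mono g" and lip: "\<And>x y. x \<le> y \<Longrightarrow> g y - g x \<le> L * (y - x)" and "0 \<le> L"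
  shows "(g (x + h) - g x) / h \<in> {0..L}"
proof -
  consider "0 < h" | "h = 0" | "h < 0" by linarith
  then show ?thesis
  proof cases
    case 1
    then show ?thesis using monoD[OF \<open>mono g\<close>, of x "x + h"] lip[of x "x + h"]
      by (simp add: pos_divide_le_eq)
  next
    case 3
    define k where "k = - h"
    have "0 < k" "x + h = x - k" using 3 by (simp_all add: k_def)
    then have "(g (x + h) - g x) / h = (g x - g (x - k)) / k" by (simp add: k_def divide_simps)
    then show ?thesis using \<open>0 < k\<close> \<open>x + h = x - k\<close> monoD[OF \<open>mono g\<close>, of "x - k" x] lip[of "x - k" x]
      by (simp add: pos_divide_le_eq)
  qed (use \<open>0 \<le> L\<close> in simp)
qed

lemma negligible_uminus_image: "negligible (S :: real set) \<Longrightarrow> negligible (uminus ` S)"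
  by (rule negligible_differentiable_image_negligible) (auto intro: differentiable_on_minus)

lemma differentiable_if_no_rational_dini_gap:
  fixes g :: "real \<Rightarrow> real"
  assumes "mono g" and lip: "\<And>x y. x \<le> y \<Longrightarrow> g y - g x \<le> L * (y - x)" and "0 \<le> L"
    and gap: "\<And>p r. p \<in> \<rat> \<Longrightarrow> r \<in> \<rat> \<Longrightarrow> 0 \<le> p \<Longrightarrow> p < r \<Longrightarrow>
      x \<notin> dini_gap g p r \<and> - x \<notin> dini_gap (\<lambda>y. - g (- y)) p r"
  shows "g differentiable (at x)"
proof -
  define qr where "qr h = (g (x + h) - g x) / h" for h
  define ql where "ql h = (g x - g (x - h)) / h" for h
  have ql_qr: "ql = (\<lambda>h. qr (- h))" unfolding ql_def qr_def by (simp add: fun_eq_iff divide_simps)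
  have qr_bounds: "qr h \<in> {0..L}" for h
    unfolding qr_def by (rule difference_quotient_mono_lipschitz[OF \<open>mono g\<close> lip \<open>0 \<le> L\<close>])
  then have bounds: "qr h \<in> {0..L}" "ql h \<in> {0..L}" for h by (simp_all add: ql_qr)
  \<comment> \<open>The reflected function turns the second pair of one-sided Dini derivatives into a \<open>dini_gap\<close>.\<close>
  have "Limsup (at_right 0) (\<lambda>h. ereal (qr h)) \<le> Liminf (at_right 0) (\<lambda>h. ereal (ql h))"
    by (rule Limsup_le_Liminf_if_no_rational_gap) (use bounds gap in \<open>auto simp: dini_gap_def qr_def ql_def\<close>)
  moreover have "Limsup (at_right 0) (\<lambda>h. ereal (ql h)) \<le> Liminf (at_right 0) (\<lambda>h. ereal (qr h))"
    by (rule Limsup_le_Liminf_if_no_rational_gap)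
       (use bounds gap in \<open>auto simp: dini_gap_def qr_def ql_def algebra_simps\<close>)
  ultimately obtain c where "(qr \<longlongrightarrow> c) (at_right 0)" "(ql \<longlongrightarrow> c) (at_right 0)"
    using tendsto_common_limit_if_crossed_Limsup_le_Liminf[of "at_right (0::real)" qr 0 L ql] bounds
    by auto
  then have "(qr \<longlongrightarrow> c) (at 0)"
    unfolding ql_qr by (intro filterlim_split_at_real) (simp_all add: filterlim_at_left_to_right)
  then have "(g has_real_derivative c) (at x)" unfolding DERIV_def qr_def .
  then show ?thesis using real_differentiable_def by blast
qed

lemma mono_lipschitz_differentiable_ae:
  fixes g :: "real \<Rightarrow> real"
  assumes "mono g" and lip: "\<And>x y. x \<le> y \<Longrightarrow> g y - g x \<le> L * (y - x)" and "0 \<le> L"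
  shows "negligible {x. \<not> g differentiable (at x)}"
proof -
  have "\<bar>g y - g x\<bar> \<le> L * \<bar>y - x\<bar>" for x y
    using lip[of x y] lip[of y x] monoD[OF \<open>mono g\<close>, of x y] monoD[OF \<open>mono g\<close>, of y x]
    by (cases "x \<le> y") auto
  then have "L-lipschitz_on UNIV g" using \<open>0 \<le> L\<close> by (intro lipschitz_onI) (auto simp: dist_real_def)
  then have cont: "continuous_on UNIV g" by (rule lipschitz_on_continuous_on)
  define g' where "g' y = - g (- y)" for y
  have "mono g'" using \<open>mono g\<close> by (simp add: g'_def monoD monoI)
  have "continuous_on UNIV g'"
    unfolding g'_def by (intro continuous_intros continuous_on_compose2[OF cont]) auto
  define Q where "Q = {(p, r). p \<in> \<rat> \<and> r \<in> \<rat> \<and> 0 \<le> p \<and> p < (r::real)}"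
  define N where "N = (\<Union>(p, r)\<in>Q. dini_gap g p r \<union> uminus ` dini_gap g' p r)"
  have "countable Q" unfolding Q_def
    by (rule countable_subset[of _ "\<rat> \<times> \<rat>"]) (auto intro: countable_rat)
  then have "negligible N" unfolding N_def
    using negligible_dini_gap[OF \<open>mono g\<close> cont] negligible_dini_gap[OF \<open>mono g'\<close> \<open>continuous_on UNIV g'\<close>]
    by (intro negligible_countable_Union countable_image) (auto simp: Q_def intro!: negligible_uminus_image)
  moreover have "g differentiable (at x)" if "x \<notin> N" for x
  proof (rule differentiable_if_no_rational_dini_gap[OF \<open>mono g\<close> lip \<open>0 \<le> L\<close>])
    fix p r :: real assume "p \<in> \<rat>" "r \<in> \<rat>" "0 \<le> p" "p < r"
    then have "x \<notin> dini_gap g p r \<union> uminus ` dini_gap g' p r" using \<open>x \<notin> N\<close> by (auto simp: N_def Q_def)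
    then show "x \<notin> dini_gap g p r \<and> - x \<notin> dini_gap (\<lambda>y. - g (- y)) p r"
      unfolding g'_def[abs_def] by (auto intro: image_eqI[of x uminus "- x"])
  qed
  then have "{x. \<not> g differentiable (at x)} \<subseteq> N" by blast
  ultimately show ?thesis by (rule negligible_subset)
qed

section \<open>Lipschitz functions are differentiable almost everywhere\<close>

lemma lipschitz_differentiable_ae:
  fixes f :: "real \<Rightarrow> 'a::euclidean_space"
  assumes lip: "\<And>x y. norm (f x - f y) \<le> L * \<bar>x - y\<bar>"
  shows "negligible {x. \<not> f differentiable (at x)}"
proof -
  have "0 \<le> L" using order_trans[OF norm_ge_zero lip[of 1 0]] by simp
  have "negligible {x. \<not> (\<lambda>t. f t \<bullet> b) differentiable (at x)}" if "b \<in> Basis" for b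
  proof -
    define g where "g t = f t \<bullet> b + L * t" for t
    have lip_b: "\<bar>f y \<bullet> b - f x \<bullet> b\<bar> \<le> L * \<bar>y - x\<bar>" for x y
      using Basis_le_norm[OF that, of "f y - f x"] lip[of y x] by (simp add: inner_diff_left)
    have "mono g"
    proof (rule monoI)
      fix x y :: real assume "x \<le> y"
      then show "g x \<le> g y" using lip_b[of y x] by (simp add: g_def abs_le_iff algebra_simps)
    qed
    moreover have "g y - g x \<le> (2 * L) * (y - x)" if "x \<le> y" for x y
      using lip_b[of x y] that by (simp add: g_def abs_le_iff algebra_simps)
    ultimately have "negligible {x. \<not> g differentiable (at x)}"
      using \<open>0 \<le> L\<close> by (intro mono_lipschitz_differentiable_ae[where L="2 * L"]) auto
    moreover have "{x. \<not> (\<lambda>t. f t \<bullet> b) differentiable (at x)} \<subseteq> {x. \<not> g differentiable (at x)}"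
    proof (intro subsetI CollectI notI)
      fix x assume "g differentiable (at x)" "x \<in> {x. \<not> (\<lambda>t. f t \<bullet> b) differentiable (at x)}"
      moreover have "(\<lambda>t. f t \<bullet> b) = (\<lambda>t. g t - L * t)" by (simp add: g_def)
      ultimately show False by (auto intro!: differentiable_diff differentiable_mult differentiable_ident)
    qed
    ultimately show ?thesis by (rule negligible_subset)
  qed
  then have "negligible (\<Union>b\<in>Basis. {x. \<not> (\<lambda>t. f t \<bullet> b) differentiable (at x)})"
    by (intro negligible_Union) auto
  moreover have "{x. \<not> f differentiable (at x)} \<subseteq> (\<Union>b\<in>Basis. {x. \<not> (\<lambda>t. f t \<bullet> b) differentiable (at x)})"
    using differentiable_componentwise_within[of f _ UNIV] by blast
  ultimately show ?thesis by (rule negligible_subset)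
qed

lemma locally_lipschitz_differentiable_ae:
  fixes f :: "real \<Rightarrow> 'a::euclidean_space"
  assumes lip: "\<And>T s s'. s \<in> {t0..T} \<Longrightarrow> s' \<in> {t0..T} \<Longrightarrow> norm (f s - f s') \<le> \<Lambda> T * \<bar>s - s'\<bar>"
    and "\<And>T. 0 \<le> \<Lambda> T"
  shows "negligible {t. t0 < t \<and> \<not> f differentiable (at t)}"
proof -
  define clamp where "clamp k s = min (t0 + real k) (max t0 s)" for k :: nat and s
  have "negligible {s. \<not> (f \<circ> clamp k) differentiable (at s)}" for k
  proof (rule lipschitz_differentiable_ae)
    fix x y
    have "norm (f (clamp k x) - f (clamp k y)) \<le> \<Lambda> (t0 + real k) * \<bar>clamp k x - clamp k y\<bar>"
      by (rule lip) (auto simp: clamp_def)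
    also have "\<dots> \<le> \<Lambda> (t0 + real k) * \<bar>x - y\<bar>"
      by (intro mult_left_mono \<open>0 \<le> \<Lambda> _\<close>) (auto simp: clamp_def)
    finally show "norm ((f \<circ> clamp k) x - (f \<circ> clamp k) y) \<le> \<Lambda> (t0 + real k) * \<bar>x - y\<bar>" by simp
  qed
  then have "negligible (\<Union>k. {s. \<not> (f \<circ> clamp k) differentiable (at s)})"
    by (rule negligible_Union_nat)
  moreover have "{t. t0 < t \<and> \<not> f differentiable (at t)} \<subseteq> (\<Union>k. {s. \<not> (f \<circ> clamp k) differentiable (at s)})"
  proof (intro subsetI)
    fix t assume "t \<in> {t. t0 < t \<and> \<not> f differentiable (at t)}"
    then have "t0 < t" "\<not> f differentiable (at t)" by simp_all
    obtain k :: nat where "t - t0 < real k" using reals_Archimedean2 by blast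
    have "f differentiable (at t)" if diff: "(f \<circ> clamp k) differentiable (at t)"
    proof -
      obtain D where "((f \<circ> clamp k) has_derivative D) (at t)" using diff by (auto simp: differentiable_def)
      then have "(f has_derivative D) (at t)"
        by (rule has_derivative_transform_within_open[where s="{t0<..<t0 + real k}"])
           (use \<open>t0 < t\<close> \<open>t - t0 < real k\<close> in \<open>auto simp: clamp_def\<close>)
      then show ?thesis by (auto simp: differentiable_def)
    qed
    with \<open>\<not> f differentiable (at t)\<close> show "t \<in> (\<Union>k. {s. \<not> (f \<circ> clamp k) differentiable (at s)})" by blast
  qed
  ultimately show ?thesis by (rule negligible_subset)
qed

lemma lipschitz_imp_abs_cont_on:
  fixes f :: "real \<Rightarrow> 'a::real_normed_vector"
  assumes lip: "\<And>s s'. s \<in> {a..b} \<Longrightarrow> s' \<in> {a..b} \<Longrightarrow> norm (f s - f s') \<le> K * \<bar>s - s'\<bar>" and "0 \<le> K"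
  shows "abs_cont_on a b f"
  unfolding abs_cont_on_def
proof (intro allI impI exI[of _ "\<epsilon> / (K + 1)" for \<epsilon>] conjI)
  fix \<epsilon> :: real and N s e assume "0 < \<epsilon>"
  then show "0 < \<epsilon> / (K + 1)" using \<open>0 \<le> K\<close> by simp
  assume H: "(\<forall>k<N. s k \<le> e k \<and> {s k..e k} \<subseteq> {a..b}) \<and>
      (\<forall>k<N. \<forall>k'<N. k \<noteq> k' \<longrightarrow> {s k<..<e k} \<inter> {s k'<..<e k'} = {}) \<and>
      (\<Sum>k<N. e k - s k) < \<epsilon> / (K + 1)"
  have "(\<Sum>k<N. norm (f (e k) - f (s k))) \<le> (\<Sum>k<N. K * (e k - s k))"
  proof (rule sum_mono)
    fix k assume "k \<in> {..<N}"
    then have "s k \<le> e k" "s k \<in> {a..b}" "e k \<in> {a..b}" using H by auto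
    then show "norm (f (e k) - f (s k)) \<le> K * (e k - s k)" using lip[of "e k" "s k"] by simp
  qed
  also have "\<dots> = K * (\<Sum>k<N. e k - s k)" by (simp add: sum_distrib_left)
  also have "\<dots> \<le> K * (\<epsilon> / (K + 1))" using H \<open>0 \<le> K\<close> by (intro mult_left_mono) auto
  also have "\<dots> < \<epsilon>" using \<open>0 < \<epsilon>\<close> \<open>0 \<le> K\<close> by (simp add: field_simps)
  finally show "(\<Sum>k<N. norm (f (e k) - f (s k))) < \<epsilon>" .
qed

section \<open>Difference quotients in closed convex sets\<close>

lemma integral_mean_in_closed_convex:
  fixes f :: "real \<Rightarrow> 'a::euclidean_space"
  assumes "f integrable_on {a..b}" "a < b" "closed K" "convex K" "\<And>x. x \<in> {a..b} \<Longrightarrow> f x \<in> K"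
  shows "integral {a..b} f /\<^sub>R (b - a) \<in> K"
proof (rule ccontr)
  assume "integral {a..b} f /\<^sub>R (b - a) \<notin> K"
  then obtain c z where c: "c \<bullet> (integral {a..b} f /\<^sub>R (b - a)) < z" "\<And>x. x \<in> K \<Longrightarrow> z < c \<bullet> x"
    using separating_hyperplane_closed_point[OF \<open>convex K\<close> \<open>closed K\<close>] by blast
  have int_f: "((\<lambda>x. c \<bullet> f x) has_integral c \<bullet> integral {a..b} f) {a..b}"
    using has_integral_linear[OF integrable_integral[OF assms(1)] bounded_linear_inner_right[of c]]
    by (simp add: o_def)
  have int_z: "((\<lambda>x. z) has_integral (b - a) * z) {a..b}"
    using has_integral_const_real[of z a b] \<open>a < b\<close> by simp
  have "z \<le> c \<bullet> f x" if "x \<in> {a..b}" for x using c(2) assms(5) that less_imp_le by blast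
  then have "(b - a) * z \<le> c \<bullet> integral {a..b} f" by (rule has_integral_le[OF int_z int_f])
  with c(1) \<open>a < b\<close> show False by (simp add: field_simps)
qed

lemma has_vector_derivative_in_closed_convex:
  fixes f :: "real \<Rightarrow> 'a::euclidean_space"
  assumes "(f has_vector_derivative d) (at t)" "closed K" "convex K" "0 < \<tau>0"
    and quotient: "\<And>\<tau>. 0 < \<tau> \<Longrightarrow> \<tau> \<le> \<tau>0 \<Longrightarrow> (f (t + \<tau>) - f t) /\<^sub>R \<tau> \<in> K"
  shows "d \<in> K"
proof (rule ccontr)
  assume "d \<notin> K"
  then obtain c z where c: "c \<bullet> d < z" "\<And>x. x \<in> K \<Longrightarrow> z < c \<bullet> x"
    using separating_hyperplane_closed_point[OF \<open>convex K\<close> \<open>closed K\<close>] by blast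
  have "((\<lambda>s. c \<bullet> f s) has_derivative (\<lambda>x. c \<bullet> (x *\<^sub>R d))) (at t)"
    using bounded_linear.has_derivative[OF bounded_linear_inner_right assms(1)[unfolded has_vector_derivative_def]] .
  moreover have "(\<lambda>x. c \<bullet> (x *\<^sub>R d)) = (*) (c \<bullet> d)" by (auto simp: fun_eq_iff)
  ultimately have "((\<lambda>s. c \<bullet> f s) has_real_derivative c \<bullet> d) (at t)"
    by (simp add: has_field_derivative_def)
  then have "((\<lambda>\<tau>. (c \<bullet> f (t + \<tau>) - c \<bullet> f t) / \<tau>) \<longlongrightarrow> c \<bullet> d) (at_right 0)"
    using filterlim_at_split unfolding DERIV_def by blast
  moreover have "\<forall>\<^sub>F \<tau> in at_right 0. z \<le> (c \<bullet> f (t + \<tau>) - c \<bullet> f t) / \<tau>"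
    unfolding eventually_at_right_field
  proof (intro exI conjI allI impI)
    fix \<tau> :: real assume "0 < \<tau>" "\<tau> < \<tau>0"
    then have "z < c \<bullet> ((f (t + \<tau>) - f t) /\<^sub>R \<tau>)" by (intro c(2) quotient) auto
    then show "z \<le> (c \<bullet> f (t + \<tau>) - c \<bullet> f t) / \<tau>" by (simp add: inner_diff_right divide_inverse mult.commute)
  qed (use \<open>0 < \<tau>0\<close> in auto)
  ultimately have "z \<le> c \<bullet> d" by (rule tendsto_lowerbound) simp
  with c(1) show False by simp
qed

section \<open>Pointwise convergent subsequences\<close>

lemma convergent_subseq_on_countable:
  fixes F :: "nat \<Rightarrow> 'a \<Rightarrow> 'b::heine_borel"
  assumes "countable D" and bdd: "\<And>x. x \<in> D \<Longrightarrow> bounded (range (\<lambda>k. F k x))"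
  obtains \<sigma> where "strict_mono \<sigma>" "\<And>x. x \<in> D \<Longrightarrow> convergent (\<lambda>k. F (\<sigma> k) x)"
proof (cases "D = {}")
  case True
  then show thesis using that[of id] by (simp add: strict_mono_id)
next
  case False
  define e where "e = from_nat_into D"
  have D: "D = range e" unfolding e_def using range_from_nat_into[OF False \<open>countable D\<close>] by simp
  interpret subseqs "\<lambda>n s. convergent (\<lambda>k. F (s k) (e n))"
  proof
    fix n and s :: "nat \<Rightarrow> nat"
    have "bounded (range (\<lambda>k. F k (e n)))" using bdd D by auto
    then have "bounded (range (\<lambda>k. F (s k) (e n)))" by (rule bounded_subset) auto
    then obtain l r where "strict_mono r" "((\<lambda>k. F (s k) (e n)) \<circ> r) \<longlonglongrightarrow> l"
      using bounded_imp_convergent_subsequence by blast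
    then show "\<exists>r'. strict_mono r' \<and> convergent (\<lambda>k. F ((s \<circ> r') k) (e n))"
      by (auto simp: convergent_def o_def)
  qed
  have "convergent (\<lambda>k. F (diagseq k) (e n))" for n
  proof -
    have "convergent (\<lambda>k. F ((diagseq \<circ> (+) (Suc n)) k) (e n))"
    proof (rule diagseq_holds)
      fix r s :: "nat \<Rightarrow> nat" and n assume "strict_mono r" "convergent (\<lambda>k. F (s k) (e n))"
      then show "convergent (\<lambda>k. F ((s \<circ> r) k) (e n))"
        using LIMSEQ_subseq_LIMSEQ by (auto simp: convergent_def o_def)
    qed
    then obtain l where "(\<lambda>k. F (diagseq (k + Suc n)) (e n)) \<longlonglongrightarrow> l"
      by (auto simp: convergent_def o_def add.commute)
    then show ?thesis unfolding convergent_def by (blast intro: LIMSEQ_offset)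
  qed
  then show thesis using that[OF subseq_diagseq] D by blast
qed

lemma convergent_if_equi_lipschitz_near:
  fixes F :: "nat \<Rightarrow> 'a::metric_space \<Rightarrow> 'b::banach"
  assumes "x \<in> S" "0 \<le> \<Lambda>"
    and lip: "\<And>k y z. y \<in> S \<Longrightarrow> z \<in> S \<Longrightarrow> norm (F k y - F k z) \<le> \<Lambda> * dist y z"
    and near: "\<And>\<epsilon>. 0 < \<epsilon> \<Longrightarrow> \<exists>y\<in>S. dist y x < \<epsilon> \<and> convergent (\<lambda>k. F k y)"
  shows "convergent (\<lambda>k. F k x)"
  unfolding Cauchy_convergent_iff[symmetric]
proof (rule CauchyI)
  fix \<epsilon> :: real assume "0 < \<epsilon>"
  define \<eta> where "\<eta> = \<epsilon> / (3 * (\<Lambda> + 1))"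
  have "0 < \<eta>" using \<open>0 < \<epsilon>\<close> \<open>0 \<le> \<Lambda>\<close> by (simp add: \<eta>_def)
  obtain y where "y \<in> S" "dist y x < \<eta>" "convergent (\<lambda>k. F k y)" using near[OF \<open>0 < \<eta>\<close>] by blast
  have close: "norm (F k y - F k x) < \<epsilon> / 3" for k
  proof -
    have "norm (F k y - F k x) \<le> \<Lambda> * dist y x" using lip \<open>y \<in> S\<close> \<open>x \<in> S\<close> by blast
    also have "\<dots> \<le> \<Lambda> * \<eta>" using \<open>dist y x < \<eta>\<close> \<open>0 \<le> \<Lambda>\<close> by (simp add: mult_left_mono)
    also have "\<dots> < \<epsilon> / 3" using \<open>0 < \<epsilon>\<close> \<open>0 \<le> \<Lambda>\<close> by (simp add: \<eta>_def field_simps)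
    finally show ?thesis .
  qed
  obtain N where N: "\<And>k l. N \<le> k \<Longrightarrow> N \<le> l \<Longrightarrow> norm (F k y - F l y) < \<epsilon> / 3"
    using convergent_Cauchy[OF \<open>convergent (\<lambda>k. F k y)\<close>] \<open>0 < \<epsilon>\<close> unfolding Cauchy_iff
    by (metis divide_pos_pos zero_less_numeral)
  show "\<exists>N. \<forall>k\<ge>N. \<forall>l\<ge>N. norm (F k x - F l x) < \<epsilon>"
  proof (intro exI allI impI)
    fix k l assume "N \<le> k" "N \<le> l"
    have "norm (F k x - F l x) \<le> norm (F k y - F k x) + norm (F k y - F l y) + norm (F l y - F l x)"
      using norm_diff_triangle_le norm_minus_commute by (smt (verit) norm_triangle_ineq4)
    then show "norm (F k x - F l x) < \<epsilon>" using close[of k] close[of l] N[OF \<open>N \<le> k\<close> \<open>N \<le> l\<close>] by linarith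
  qed
qed

lemma locally_equi_lipschitz_convergent_subseq:
  fixes F :: "nat \<Rightarrow> real \<Rightarrow> 'a::euclidean_space"
  assumes start: "\<And>k. F k t0 = q0"
    and lip: "\<And>k T s s'. s \<in> {t0..T} \<Longrightarrow> s' \<in> {t0..T} \<Longrightarrow> norm (F k s - F k s') \<le> \<Lambda> T * \<bar>s - s'\<bar>"
    and "\<And>T. 0 \<le> \<Lambda> T"
  obtains \<sigma> f where "strict_mono \<sigma>" "\<And>s. t0 \<le> s \<Longrightarrow> (\<lambda>k. F (\<sigma> k) s) \<longlonglongrightarrow> f s"
proof -
  define D where "D = (\<lambda>\<rho>. t0 + \<rho>) ` (\<rat> \<inter> {0..})"
  have "countable D" unfolding D_def by (intro countable_image countable_Int1 countable_rat)
  moreover have "bounded (range (\<lambda>k. F k s))" if "s \<in> D" for s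
  proof -
    have "norm (F k s) \<le> norm q0 + \<Lambda> s * \<bar>s - t0\<bar>" for k
      using lip[of s s t0 k] start[of k] that norm_triangle_sub[of "F k s" q0]
      by (auto simp: D_def)
    then show ?thesis unfolding bounded_iff by blast
  qed
  ultimately obtain \<sigma> where "strict_mono \<sigma>" and conv_D: "\<And>s. s \<in> D \<Longrightarrow> convergent (\<lambda>k. F (\<sigma> k) s)"
    using convergent_subseq_on_countable[of D F] by blast
  have "convergent (\<lambda>k. F (\<sigma> k) s)" if "t0 \<le> s" for s
  proof (rule convergent_if_equi_lipschitz_near[of s "{t0..s + 1}" "\<Lambda> (s + 1)"])
    show "norm (F (\<sigma> k) y - F (\<sigma> k) z) \<le> \<Lambda> (s + 1) * dist y z" if "y \<in> {t0..s + 1}" "z \<in> {t0..s + 1}" for k y z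
      using lip[OF that] by (simp add: dist_real_def)
    fix \<epsilon> :: real assume "0 < \<epsilon>"
    then obtain \<rho> where "\<rho> \<in> \<rat>" "s - t0 < \<rho>" "\<rho> < s - t0 + min 1 \<epsilon>"
      using Rats_dense_in_real[of "s - t0" "s - t0 + min 1 \<epsilon>"] by auto
    then have "t0 + \<rho> \<in> D" "t0 + \<rho> \<in> {t0..s + 1}" "dist (t0 + \<rho>) s < \<epsilon>"
      using \<open>t0 \<le> s\<close> by (auto simp: D_def dist_real_def)
    then show "\<exists>y\<in>{t0..s + 1}. dist y s < \<epsilon> \<and> convergent (\<lambda>k. F (\<sigma> k) y)" using conv_D by blast
  qed (use \<open>t0 \<le> s\<close> \<open>\<And>T. 0 \<le> \<Lambda> T\<close> in auto)
  then show thesis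
    using that[OF \<open>strict_mono \<sigma>\<close>, of "\<lambda>s. lim (\<lambda>k. F (\<sigma> k) s)"] by (simp add: convergent_LIMSEQ_iff)
qed

section \<open>Euler polygons\<close>

primrec euler_nodes :: "(real \<times> 'n \<Rightarrow> 'n) \<Rightarrow> real \<Rightarrow> 'n \<Rightarrow> real \<Rightarrow> nat \<Rightarrow> 'n::euclidean_space" where
  "euler_nodes u t0 q0 h 0 = q0"
| "euler_nodes u t0 q0 h (Suc j) =
     euler_nodes u t0 q0 h j + h *\<^sub>R u (t0 + real j * h, euler_nodes u t0 q0 h j)"

definition euler_index :: "real \<Rightarrow> real \<Rightarrow> real \<Rightarrow> nat" where
  "euler_index t0 h s = nat \<lfloor>(s - t0) / h\<rfloor>"

definition euler_slope :: "(real \<times> 'n \<Rightarrow> 'n) \<Rightarrow> real \<Rightarrow> 'n \<Rightarrow> real \<Rightarrow> real \<Rightarrow> 'n::euclidean_space" where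
  "euler_slope u t0 q0 h s = u (t0 + real (euler_index t0 h s) * h, euler_nodes u t0 q0 h (euler_index t0 h s))"

text \<open>The polygon is the integral of its piecewise constant slope, so that its Lipschitz bound
  and the location of its difference quotients become estimates of integrals.\<close>
definition euler_polygon :: "(real \<times> 'n \<Rightarrow> 'n) \<Rightarrow> real \<Rightarrow> 'n \<Rightarrow> real \<Rightarrow> real \<Rightarrow> 'n::euclidean_space" where
  "euler_polygon u t0 q0 h s = q0 + integral {t0..s} (euler_slope u t0 q0 h)"

lemma euler_index_eq:
  assumes "0 < h" "t0 + real j * h \<le> s" "s < t0 + real (Suc j) * h"
  shows "euler_index t0 h s = j"
proof -
  have "real j \<le> (s - t0) / h" "(s - t0) / h < real j + 1"
    using assms by (auto simp: field_simps)
  then have "\<lfloor>(s - t0) / h\<rfloor> = int j" by (intro floor_unique) auto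
  then show ?thesis unfolding euler_index_def by simp
qed

lemma euler_index_bounds:
  assumes "0 < h" "t0 \<le> s"
  shows "t0 + real (euler_index t0 h s) * h \<le> s" "s < t0 + real (Suc (euler_index t0 h s)) * h"
proof -
  have idx: "real (euler_index t0 h s) = of_int \<lfloor>(s - t0) / h\<rfloor>"
    using assms unfolding euler_index_def by simp
  have "of_int \<lfloor>(s - t0) / h\<rfloor> * h \<le> s - t0"
    using of_int_floor_le[of "(s - t0) / h"] assms(1) by (simp add: le_divide_eq)
  then show "t0 + real (euler_index t0 h s) * h \<le> s" using idx by simp
  have "s - t0 < (of_int \<lfloor>(s - t0) / h\<rfloor> + 1) * h"
    using real_of_int_floor_add_one_gt[of "(s - t0) / h"] by (simp only: pos_divide_less_eq[OF assms(1)])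
  then show "s < t0 + real (Suc (euler_index t0 h s)) * h" using idx by (simp add: algebra_simps)
qed

lemma has_integral_euler_slope_step:
  assumes "0 < h"
  shows "(euler_slope u t0 q0 h has_integral h *\<^sub>R u (t0 + real j * h, euler_nodes u t0 q0 h j))
    {t0 + real j * h .. t0 + real (Suc j) * h}"
proof (rule has_integral_spike_finite[of "{t0 + real (Suc j) * h}"])
  show "((\<lambda>x. u (t0 + real j * h, euler_nodes u t0 q0 h j)) has_integral
      h *\<^sub>R u (t0 + real j * h, euler_nodes u t0 q0 h j)) {t0 + real j * h .. t0 + real (Suc j) * h}"
    using has_integral_const_real[of "u (t0 + real j * h, euler_nodes u t0 q0 h j)"
        "t0 + real j * h" "t0 + real (Suc j) * h"] \<open>0 < h\<close>
    by (simp add: algebra_simps)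
next
  fix x assume "x \<in> {t0 + real j * h .. t0 + real (Suc j) * h} - {t0 + real (Suc j) * h}"
  then have "euler_index t0 h x = j" by (intro euler_index_eq[OF \<open>0 < h\<close>]) auto
  then show "euler_slope u t0 q0 h x = u (t0 + real j * h, euler_nodes u t0 q0 h j)"
    unfolding euler_slope_def by simp
qed simp

lemma has_integral_euler_slope_nodes:
  assumes "0 < h"
  shows "(euler_slope u t0 q0 h has_integral euler_nodes u t0 q0 h j - q0) {t0 .. t0 + real j * h}"
proof (induction j)
  case 0
  show ?case using has_integral_refl(2)[of "euler_slope u t0 q0 h" t0] by simp
next
  case (Suc j)
  have "(euler_slope u t0 q0 h has_integral (euler_nodes u t0 q0 h j - q0) +
      h *\<^sub>R u (t0 + real j * h, euler_nodes u t0 q0 h j)) {t0 .. t0 + real (Suc j) * h}"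
    by (rule has_integral_combine[OF _ _ Suc.IH has_integral_euler_slope_step[OF assms]])
       (use assms in \<open>auto simp: algebra_simps\<close>)
  then show ?case by (simp add: algebra_simps)
qed

lemma euler_slope_integrable:
  assumes "0 < h" "t0 \<le> a"
  shows "euler_slope u t0 q0 h integrable_on {a..b}"
proof (cases "a \<le> b")
  case True
  have "b < t0 + real (Suc (euler_index t0 h b)) * h"
    using euler_index_bounds(2)[OF assms(1)] True assms(2) by simp
  then have "{a..b} \<subseteq> {t0 .. t0 + real (Suc (euler_index t0 h b)) * h}" using assms(2) by auto
  then show ?thesis
    using integrable_subinterval_real has_integral_euler_slope_nodes[OF assms(1)] by blast
qed auto

lemma euler_polygon_start: "euler_polygon u t0 q0 h t0 = q0"
  unfolding euler_polygon_def by simp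

lemma euler_polygon_node:
  assumes "0 < h"
  shows "euler_polygon u t0 q0 h (t0 + real j * h) = euler_nodes u t0 q0 h j"
proof -
  have "integral {t0 .. t0 + real j * h} (euler_slope u t0 q0 h) = euler_nodes u t0 q0 h j - q0"
    by (rule integral_unique[OF has_integral_euler_slope_nodes[OF assms]])
  then show ?thesis unfolding euler_polygon_def by simp
qed

lemma euler_polygon_diff:
  assumes "0 < h" "t0 \<le> s" "s \<le> s'"
  shows "euler_polygon u t0 q0 h s' - euler_polygon u t0 q0 h s = integral {s..s'} (euler_slope u t0 q0 h)"
proof -
  have "integral {t0..s} (euler_slope u t0 q0 h) + integral {s..s'} (euler_slope u t0 q0 h) =
      integral {t0..s'} (euler_slope u t0 q0 h)"
    using assms by (intro Henstock_Kurzweil_Integration.integral_combine euler_slope_integrable) auto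
  then show ?thesis unfolding euler_polygon_def by (simp add: algebra_simps)
qed

lemma euler_slope_at_node:
  assumes "0 < h" "t0 \<le> s"
  obtains t' where "t0 \<le> t'" "s - h \<le> t'" "t' \<le> s"
    "euler_slope u t0 q0 h s = u (t', euler_polygon u t0 q0 h t')"
proof
  let ?t = "t0 + real (euler_index t0 h s) * h"
  show "t0 \<le> ?t" using assms by simp
  show "s - h \<le> ?t" "?t \<le> s" using euler_index_bounds[OF assms] by (auto simp: algebra_simps)
  show "euler_slope u t0 q0 h s = u (?t, euler_polygon u t0 q0 h ?t)"
    unfolding euler_slope_def euler_polygon_node[OF assms(1)] ..
qed

lemma dist_Pair_le_add: "dist (a, b) (c, d) \<le> dist a c + dist b d"
  unfolding dist_Pair_Pair using sqrt_sum_squares_le_sum_abs[of "dist a c" "dist b d"] by simp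

locale linear_growth =
  fixes u :: "real \<times> 'n::euclidean_space \<Rightarrow> 'n" and M :: real
  assumes M_pos: "0 < M" and growth: "\<And>t q. norm (u (t, q)) \<le> M * (1 + norm q)"
begin

lemma euler_nodes_growth:
  assumes "0 \<le> h"
  shows "1 + norm (euler_nodes u t0 q0 h j) \<le> exp (M * (real j * h)) * (1 + norm q0)"
proof (induction j)
  case (Suc j)
  let ?P = "euler_nodes u t0 q0 h j"
  have "1 + norm (euler_nodes u t0 q0 h (Suc j)) \<le> 1 + norm ?P + h * norm (u (t0 + real j * h, ?P))"
    using assms by (simp add: norm_triangle_le)
  also have "\<dots> \<le> (1 + norm ?P) * (1 + h * M)"
    using mult_left_mono[OF growth assms] by (simp add: algebra_simps)
  also have "\<dots> \<le> (1 + norm ?P) * exp (h * M)"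
    using exp_ge_add_one_self[of "h * M"] by (intro mult_left_mono) (auto simp: add.commute)
  also have "\<dots> \<le> exp (M * (real j * h)) * (1 + norm q0) * exp (h * M)"
    by (intro mult_right_mono Suc.IH) auto
  also have "\<dots> = exp (M * (real (Suc j) * h)) * (1 + norm q0)"
    by (simp add: algebra_simps exp_add[symmetric])
  finally show ?case .
qed simp

definition euler_speed :: "real \<Rightarrow> 'n \<Rightarrow> real \<Rightarrow> real" where
  "euler_speed t0 q0 T = M * exp (M * (T - t0)) * (1 + norm q0)"

lemma euler_speed_nonneg: "0 \<le> euler_speed t0 q0 T"
  unfolding euler_speed_def using M_pos by simp

lemma euler_slope_bound:
  assumes "0 < h" "t0 \<le> s" "s \<le> T"
  shows "norm (euler_slope u t0 q0 h s) \<le> euler_speed t0 q0 T"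
proof -
  let ?j = "euler_index t0 h s"
  have "real ?j * h \<le> T - t0" using euler_index_bounds[OF assms(1,2)] assms(3) by simp
  have "norm (euler_slope u t0 q0 h s) \<le> M * (1 + norm (euler_nodes u t0 q0 h ?j))"
    unfolding euler_slope_def by (rule growth)
  also have "\<dots> \<le> M * (exp (M * (real ?j * h)) * (1 + norm q0))"
    using euler_nodes_growth[of h t0 q0 ?j] assms M_pos by (intro mult_left_mono) auto
  also have "\<dots> \<le> euler_speed t0 q0 T"
    unfolding euler_speed_def using M_pos \<open>real ?j * h \<le> T - t0\<close>
    by (simp add: mult.assoc mult_left_mono mult_right_mono)
  finally show ?thesis .
qed

lemma euler_polygon_lipschitz:
  assumes "0 < h" "s \<in> {t0..T}" "s' \<in> {t0..T}"
  shows "norm (euler_polygon u t0 q0 h s - euler_polygon u t0 q0 h s') \<le> euler_speed t0 q0 T * \<bar>s - s'\<bar>"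
proof -
  have *: "norm (euler_polygon u t0 q0 h b - euler_polygon u t0 q0 h a) \<le> euler_speed t0 q0 T * (b - a)"
    if "t0 \<le> a" "a \<le> b" "b \<le> T" for a b
  proof -
    have "(euler_slope u t0 q0 h has_integral integral {a..b} (euler_slope u t0 q0 h)) {a..b}"
      using euler_slope_integrable[OF assms(1) that(1)] by (rule integrable_integral)
    then have "norm (integral {a..b} (euler_slope u t0 q0 h)) \<le> euler_speed t0 q0 T * (b - a)"
      using has_integral_bound_real[OF euler_speed_nonneg finite.emptyI, of "euler_slope u t0 q0 h" _ a b]
        euler_slope_bound[OF assms(1)] that by simp
    moreover have "euler_polygon u t0 q0 h b - euler_polygon u t0 q0 h a = integral {a..b} (euler_slope u t0 q0 h)"
      by (rule euler_polygon_diff) (use assms that in auto)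
    ultimately show ?thesis by simp
  qed
  show ?thesis
  proof (cases "s \<le> s'")
    case True then show ?thesis using *[of s s'] assms by (simp add: norm_minus_commute)
  next
    case False then show ?thesis using *[of s' s] assms by simp
  qed
qed

lemma euler_slope_in_image_cball:
  assumes "0 < h" "h \<le> \<tau>" "t0 \<le> t" "s \<in> {t..t + \<tau>}" "t + \<tau> \<le> T"
  shows "euler_slope u t0 q0 h s \<in> u ` cball (t, euler_polygon u t0 q0 h t) (\<tau> * (1 + euler_speed t0 q0 T))"
proof -
  obtain t' where t': "t0 \<le> t'" "s - h \<le> t'" "t' \<le> s" "euler_slope u t0 q0 h s = u (t', euler_polygon u t0 q0 h t')"
    using euler_slope_at_node[OF \<open>0 < h\<close>, of t0 s u q0] assms by auto
  have "\<bar>t' - t\<bar> \<le> \<tau>" using t' assms by auto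
  have "norm (euler_polygon u t0 q0 h t' - euler_polygon u t0 q0 h t) \<le> euler_speed t0 q0 T * \<bar>t' - t\<bar>"
    using t' assms by (intro euler_polygon_lipschitz) auto
  also have "\<dots> \<le> euler_speed t0 q0 T * \<tau>"
    using \<open>\<bar>t' - t\<bar> \<le> \<tau>\<close> euler_speed_nonneg by (rule mult_left_mono)
  finally have "norm (euler_polygon u t0 q0 h t' - euler_polygon u t0 q0 h t) \<le> euler_speed t0 q0 T * \<tau>" .
  moreover have "dist (t', euler_polygon u t0 q0 h t') (t, euler_polygon u t0 q0 h t) \<le>
      \<bar>t' - t\<bar> + norm (euler_polygon u t0 q0 h t' - euler_polygon u t0 q0 h t)"
    using dist_Pair_le_add[of t' "euler_polygon u t0 q0 h t'" t "euler_polygon u t0 q0 h t"]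
    by (simp add: dist_real_def dist_norm)
  ultimately have "dist (t', euler_polygon u t0 q0 h t') (t, euler_polygon u t0 q0 h t) \<le> \<tau> * (1 + euler_speed t0 q0 T)"
    using \<open>\<bar>t' - t\<bar> \<le> \<tau>\<close> by (simp add: algebra_simps)
  then have "(t', euler_polygon u t0 q0 h t') \<in> cball (t, euler_polygon u t0 q0 h t) (\<tau> * (1 + euler_speed t0 q0 T))"
    by (simp add: dist_commute)
  then show ?thesis unfolding t'(4) by (rule imageI)
qed

lemma euler_polygon_quotient_in_hull:
  assumes "0 < h" "h \<le> \<tau>" "t0 \<le> t" "t + \<tau> \<le> T"
  shows "(euler_polygon u t0 q0 h (t + \<tau>) - euler_polygon u t0 q0 h t) /\<^sub>R \<tau> \<in>
    closure (convex hull (u ` cball (t, euler_polygon u t0 q0 h t) (\<tau> * (1 + euler_speed t0 q0 T))))"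
proof -
  have "euler_polygon u t0 q0 h (t + \<tau>) - euler_polygon u t0 q0 h t = integral {t..t + \<tau>} (euler_slope u t0 q0 h)"
    by (rule euler_polygon_diff) (use assms in auto)
  moreover have "integral {t..t + \<tau>} (euler_slope u t0 q0 h) /\<^sub>R ((t + \<tau>) - t) \<in>
      closure (convex hull (u ` cball (t, euler_polygon u t0 q0 h t) (\<tau> * (1 + euler_speed t0 q0 T))))"
  proof (rule integral_mean_in_closed_convex)
    show "euler_slope u t0 q0 h integrable_on {t..t + \<tau>}"
      using assms by (intro euler_slope_integrable) auto
    fix s assume "s \<in> {t..t + \<tau>}"
    then have "euler_slope u t0 q0 h s \<in> u ` cball (t, euler_polygon u t0 q0 h t) (\<tau> * (1 + euler_speed t0 q0 T))"
      by (rule euler_slope_in_image_cball[OF assms(1,2,3) _ assms(4)])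
    then show "euler_slope u t0 q0 h s \<in> closure (convex hull (u ` cball (t, euler_polygon u t0 q0 h t) (\<tau> * (1 + euler_speed t0 q0 T))))"
      by (meson closure_subset hull_inc subsetD)
  qed (use assms in auto)
  ultimately show ?thesis by simp
qed

lemma euler_limit_quotient_in_hull:
  assumes hk: "\<And>k. 0 < hk k" "hk \<longlonglongrightarrow> 0"
    and conv: "\<And>s. t0 \<le> s \<Longrightarrow> (\<lambda>k. euler_polygon u t0 q0 (hk k) s) \<longlonglongrightarrow> f s"
    and "t0 \<le> t" "0 < \<delta>"
  obtains \<tau>0 where "0 < \<tau>0"
    "\<And>\<tau>. 0 < \<tau> \<Longrightarrow> \<tau> \<le> \<tau>0 \<Longrightarrow> (f (t + \<tau>) - f t) /\<^sub>R \<tau> \<in> closure (convex hull (u ` cball (t, f t) \<delta>))"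
proof
  define \<Lambda> where "\<Lambda> = euler_speed t0 q0 (t + 1)"
  show "0 < min 1 (\<delta> / (2 * (1 + \<Lambda>)))"
    using \<open>0 < \<delta>\<close> euler_speed_nonneg[of t0 q0 "t + 1"] by (simp add: \<Lambda>_def)
  fix \<tau> assume "0 < \<tau>" "\<tau> \<le> min 1 (\<delta> / (2 * (1 + \<Lambda>)))"
  define K where "K = closure (convex hull (u ` cball (t, f t) \<delta>))"
  have "\<tau> * (1 + \<Lambda>) \<le> \<delta> / 2"
    using \<open>\<tau> \<le> _\<close> euler_speed_nonneg[of t0 q0 "t + 1"] by (simp add: \<Lambda>_def field_simps)
  have "\<forall>\<^sub>F k in sequentially. hk k \<le> \<tau>"
    using order_tendstoD(2)[OF hk(2) \<open>0 < \<tau>\<close>] by (rule eventually_mono) simp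
  moreover have "\<forall>\<^sub>F k in sequentially. dist (euler_polygon u t0 q0 (hk k) t) (f t) < \<delta> / 2"
    using tendstoD[OF conv[OF \<open>t0 \<le> t\<close>], of "\<delta> / 2"] \<open>0 < \<delta>\<close> by simp
  ultimately have "\<forall>\<^sub>F k in sequentially.
      (euler_polygon u t0 q0 (hk k) (t + \<tau>) - euler_polygon u t0 q0 (hk k) t) /\<^sub>R \<tau> \<in> K"
  proof eventually_elim
    case (elim k)
    have "cball (t, euler_polygon u t0 q0 (hk k) t) (\<tau> * (1 + \<Lambda>)) \<subseteq> cball (t, f t) \<delta>"
      unfolding cball_subset_cball_iff using elim(2) \<open>\<tau> * (1 + \<Lambda>) \<le> \<delta> / 2\<close> by (simp add: dist_Pair_Pair)
    then have "closure (convex hull (u ` cball (t, euler_polygon u t0 q0 (hk k) t) (\<tau> * (1 + \<Lambda>)))) \<subseteq> K"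
      unfolding K_def by (intro closure_mono hull_mono image_mono)
    moreover have "(euler_polygon u t0 q0 (hk k) (t + \<tau>) - euler_polygon u t0 q0 (hk k) t) /\<^sub>R \<tau> \<in>
        closure (convex hull (u ` cball (t, euler_polygon u t0 q0 (hk k) t) (\<tau> * (1 + \<Lambda>))))"
      unfolding \<Lambda>_def using hk(1) elim(1) \<open>t0 \<le> t\<close> \<open>\<tau> \<le> _\<close>
      by (intro euler_polygon_quotient_in_hull) auto
    ultimately show ?case by blast
  qed
  moreover have "(\<lambda>k. (euler_polygon u t0 q0 (hk k) (t + \<tau>) - euler_polygon u t0 q0 (hk k) t) /\<^sub>R \<tau>)
      \<longlonglongrightarrow> (f (t + \<tau>) - f t) /\<^sub>R \<tau>"
    using \<open>t0 \<le> t\<close> \<open>0 < \<tau>\<close> by (intro tendsto_intros conv) auto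
  ultimately show "(f (t + \<tau>) - f t) /\<^sub>R \<tau> \<in> closure (convex hull (u ` cball (t, f t) \<delta>))"
    unfolding K_def by (rule Lim_in_closed_set[OF closed_closure _ sequentially_bot])
qed

lemma euler_limit_derivative_in_krasovskii_set:
  assumes hk: "\<And>k. 0 < hk k" "hk \<longlonglongrightarrow> 0"
    and conv: "\<And>s. t0 \<le> s \<Longrightarrow> (\<lambda>k. euler_polygon u t0 q0 (hk k) s) \<longlonglongrightarrow> f s"
    and "t0 \<le> t" and deriv: "(f has_vector_derivative d) (at t)"
  shows "d \<in> krasovskii_set u (t, f t)"
  unfolding krasovskii_set_def
proof (rule INT_I)
  fix \<delta> :: real assume "\<delta> \<in> {0<..}"
  then have "0 < \<delta>" by simp
  obtain \<tau>0 where "0 < \<tau>0" and quotient: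
    "\<And>\<tau>. 0 < \<tau> \<Longrightarrow> \<tau> \<le> \<tau>0 \<Longrightarrow> (f (t + \<tau>) - f t) /\<^sub>R \<tau> \<in> closure (convex hull (u ` cball (t, f t) \<delta>))"
    using euler_limit_quotient_in_hull[OF hk conv \<open>t0 \<le> t\<close> \<open>0 < \<delta>\<close>] by blast
  show "d \<in> closure (convex hull (u ` cball (t, f t) \<delta>))"
    by (rule has_vector_derivative_in_closed_convex
        [OF deriv closed_closure convex_closure[OF convex_convex_hull] \<open>0 < \<tau>0\<close> quotient])
qed

end

section \<open>Krasovskii solutions for right-hand sides of linear growth\<close>

theorem krasovskii_solution_exists_linear_growth:
  fixes u :: "real \<times> 'n::euclidean_space \<Rightarrow> 'n"
  assumes "0 < M" "\<And>t q. norm (u (t, q)) \<le> M * (1 + norm q)"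
  shows "\<exists>q. krasovskii_solution u t0 q0 q"
proof -
  interpret linear_growth u M using assms by unfold_locales
  define hk where "hk k = inverse (real (Suc k))" for k
  define F where "F k = euler_polygon u t0 q0 (hk k)" for k
  define \<Lambda> where "\<Lambda> = euler_speed t0 q0"
  have "0 < hk k" for k by (simp add: hk_def)
  have start: "F k t0 = q0" for k by (simp add: F_def euler_polygon_start)
  have F_lip: "norm (F k s - F k s') \<le> \<Lambda> T * \<bar>s - s'\<bar>" if "s \<in> {t0..T}" "s' \<in> {t0..T}" for k T s s'
    unfolding F_def \<Lambda>_def using \<open>0 < hk k\<close> that by (rule euler_polygon_lipschitz)
  have "0 \<le> \<Lambda> T" for T unfolding \<Lambda>_def by (rule euler_speed_nonneg)
  obtain \<sigma> f where "strict_mono \<sigma>" and conv: "\<And>s. t0 \<le> s \<Longrightarrow> (\<lambda>k. F (\<sigma> k) s) \<longlonglongrightarrow> f s"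
    using locally_equi_lipschitz_convergent_subseq[of F t0 q0 \<Lambda>, OF start F_lip \<open>\<And>T. 0 \<le> \<Lambda> T\<close>] by blast
  have f_lip: "norm (f s - f s') \<le> \<Lambda> T * \<bar>s - s'\<bar>" if "s \<in> {t0..T}" "s' \<in> {t0..T}" for T s s'
  proof (rule LIMSEQ_le_const2)
    show "(\<lambda>k. norm (F (\<sigma> k) s - F (\<sigma> k) s')) \<longlonglongrightarrow> norm (f s - f s')"
      using that by (intro tendsto_intros conv) auto
  qed (use F_lip[OF that] in simp)
  have "f t0 = q0" using conv[of t0] by (simp add: start LIMSEQ_const_iff)
  have "(\<lambda>k. hk (\<sigma> k)) \<longlonglongrightarrow> 0"
    using LIMSEQ_subseq_LIMSEQ[OF LIMSEQ_inverse_real_of_nat \<open>strict_mono \<sigma>\<close>] by (simp add: hk_def o_def)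
  have "vector_derivative f (at t) \<in> krasovskii_set u (t, f t)"
    if "t0 < t" "f differentiable (at t)" for t
  proof (rule euler_limit_derivative_in_krasovskii_set[of "\<lambda>k. hk (\<sigma> k)" t0 q0 f])
    show "(f has_vector_derivative vector_derivative f (at t)) (at t)"
      using \<open>f differentiable (at t)\<close> by (simp add: vector_derivative_works)
  qed (use \<open>0 < hk _\<close> \<open>(\<lambda>k. hk (\<sigma> k)) \<longlonglongrightarrow> 0\<close> conv \<open>t0 < t\<close> in \<open>simp_all add: F_def\<close>)
  then have "\<exists>d. (f has_vector_derivative d) (at t) \<and> d \<in> krasovskii_set u (t, f t)"
    if "t0 < t" "t \<notin> {t. t0 < t \<and> \<not> f differentiable (at t)}" for t
    using that by (auto simp: vector_derivative_works)
  moreover have "{t. t0 < t \<and> \<not> f differentiable (at t)} \<in> null_sets lebesgue"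
    unfolding negligible_iff_null_sets[symmetric] using f_lip \<open>\<And>T. 0 \<le> \<Lambda> T\<close>
    by (rule locally_lipschitz_differentiable_ae)
  moreover have "abs_cont_on a b f" if "t0 \<le> a" "a \<le> b" for a b
    using f_lip \<open>0 \<le> \<Lambda> b\<close> that by (intro lipschitz_imp_abs_cont_on) auto
  ultimately show ?thesis
    using \<open>f t0 = q0\<close> unfolding krasovskii_solution_def by blast
qed

section \<open>Linear growth of the PIK controller\<close>

lemma abs_matrix_entry_le_norm: "\<bar>A $ i $ j\<bar> \<le> norm (A :: real^'n^'m)"
  using component_le_norm_cart[of "A $ i" j] Finite_Cartesian_Product.norm_nth_le[of A i] by linarith

lemma norm_matrix_vector_mult_le:
  fixes A :: "real^'n^'m"
  shows "norm (A *v x) \<le> real CARD('m) * real CARD('n) * norm A * norm x"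
proof -
  have "norm (A *v x) \<le> onorm ((*v) A) * norm x"
    by (rule onorm[OF matrix_vector_mul_bounded_linear])
  also have "\<dots> \<le> real CARD('m) * real CARD('n) * norm A * norm x"
    by (intro mult_right_mono onorm_le_matrix_component abs_matrix_entry_le_norm) simp
  finally show ?thesis .
qed

lemma norm_vector_matrix_mult_le:
  fixes A :: "real^'n^'m"
  shows "norm (x v* A) \<le> real CARD('n) * real CARD('m) * norm A * norm x"
proof -
  have "\<bar>transpose A $ i $ j\<bar> \<le> norm A" for i j
    using abs_matrix_entry_le_norm[of A j i] by (simp add: transpose_def)
  have "norm (transpose A *v x) \<le> onorm ((*v) (transpose A)) * norm x"
    by (rule onorm[OF matrix_vector_mul_bounded_linear])
  also have "\<dots> \<le> real CARD('n) * real CARD('m) * norm A * norm x"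
    by (intro mult_right_mono onorm_le_matrix_component) (fact | simp)+
  finally have "norm (transpose A *v x) \<le> real CARD('n) * real CARD('m) * norm A * norm x" .
  then show ?thesis by (simp add: transpose_matrix_vector)
qed

lemma length_gs_rows: "length (gs_rows j i) = i"
  by (induction i) (simp_all add: Let_def)

lemma norm_gs_hat_le_1: "norm (gs_hat j i) \<le> 1"
proof -
  define v where "v = j i - sum_list (map (\<lambda>h. (h \<bullet> j i) *\<^sub>R h) (gs_rows j i))"
  have "gs_hat j i = (if norm v > 0 then v /\<^sub>R norm v else 0)"
    unfolding gs_hat_def v_def by (simp add: Let_def nth_append length_gs_rows)
  then show ?thesis by simp
qed

lemma abs_inner_gs_hat_le: "\<bar>gs_hat j k \<bullet> x\<bar> \<le> norm x"
  using Cauchy_Schwarz_ineq2[of "gs_hat j k" x] norm_gs_hat_le_1[of j k]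
  by (meson mult_left_le_one_le norm_ge_zero order_trans)

lemma norm_gs_v_le: "norm (gs_v j i) \<le> (1 + real i) * norm (j i)"
proof -
  have "norm (\<Sum>k<i. (gs_hat j k \<bullet> j i) *\<^sub>R gs_hat j k) \<le> (\<Sum>k<i. norm (j i))"
  proof (rule order_trans[OF norm_sum sum_mono])
    fix k
    have "norm ((gs_hat j k \<bullet> j i) *\<^sub>R gs_hat j k) = \<bar>gs_hat j k \<bullet> j i\<bar> * norm (gs_hat j k)" by simp
    also have "\<dots> \<le> norm (j i) * 1"
      using abs_inner_gs_hat_le norm_gs_hat_le_1 by (intro mult_mono) auto
    finally show "norm ((gs_hat j k \<bullet> j i) *\<^sub>R gs_hat j k) \<le> norm (j i)" by simp
  qed
  then show ?thesis
    unfolding gs_v_def using norm_triangle_ineq4[of "j i" "\<Sum>k<i. (gs_hat j k \<bullet> j i) *\<^sub>R gs_hat j k"]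
    by (simp add: algebra_simps)
qed

lemma abs_gs_cD_le: "\<bar>gs_cD ms j i k\<bar> \<le> (1 + real i) * norm (j i)"
proof -
  have "\<bar>gs_hat j k \<bullet> j i\<bar> \<le> (1 + real i) * norm (j i)"
    using abs_inner_gs_hat_le[of j k "j i"] by (simp add: algebra_simps add_increasing2)
  then show ?thesis unfolding gs_cD_def gs_c_def using norm_gs_v_le[of j i] by auto
qed

lemma abs_le_sqrt_sum_squares:
  fixes a :: "nat \<Rightarrow> real"
  assumes "i < m"
  shows "\<bar>a i\<bar> \<le> sqrt (\<Sum>k<m. (a k)\<^sup>2)"
proof -
  have "(a i)\<^sup>2 \<le> (\<Sum>k<m. (a k)\<^sup>2)" by (rule member_le_sum) (use assms in auto)
  then show ?thesis using real_sqrt_le_mono by fastforce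
qed

lemma abs_sum_mult_le:
  fixes a b :: "nat \<Rightarrow> real"
  assumes "\<And>i. i < m \<Longrightarrow> \<bar>a i\<bar> \<le> A" "\<And>i. i < m \<Longrightarrow> \<bar>b i\<bar> \<le> B" "0 \<le> A"
  shows "\<bar>\<Sum>i<m. a i * b i\<bar> \<le> real m * (A * B)"
proof -
  have "\<bar>\<Sum>i<m. a i * b i\<bar> \<le> (\<Sum>i<m. \<bar>a i\<bar> * \<bar>b i\<bar>)" unfolding abs_mult[symmetric] by (rule sum_abs)
  also have "\<dots> \<le> (\<Sum>i<m. A * B)" using assms by (intro sum_mono mult_mono) auto
  finally show ?thesis by simp
qed

lemma norm_pik_u_le:
  fixes Fq :: "real \<times> (real^'n) \<Rightarrow> nat \<Rightarrow> real^'n" and R :: "real \<times> (real^'n) \<Rightarrow> real^'n^'n"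
  assumes BF: "\<And>i. i < sum_list ms \<Longrightarrow> norm (Fq x i) \<le> BF"
    and BR: "norm (matrix_inv (R x)) \<le> BR"
    and BL: "\<And>i k. i < sum_list ms \<Longrightarrow> k < sum_list ms \<Longrightarrow> \<bar>L x i k\<bar> \<le> BL"
    and residual: "\<And>i. i < sum_list ms \<Longrightarrow> \<bar>r x i - ft x i\<bar> \<le> \<rho>"
    and "0 \<le> BF" "0 \<le> BL" "0 \<le> \<rho>"
  shows "norm (pik_u ms ft Fq R r L x) \<le>
    (real CARD('n) ^ 2 * BR) ^ 2 * BF * BL * real (sum_list ms) ^ 3 * (1 + real (sum_list ms)) * \<rho>"
proof -
  define m where "m = sum_list ms"
  define n where "n = real CARD('n)"
  define BJ where "BJ = n ^ 2 * BR * BF"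
  define j where "j = Jrows Fq R x"
  define w where "w i = (\<Sum>k<m. L x i k * (r x k - ft x k))" for i
  define z where "z k = (\<Sum>i<m. gs_cD ms j i k * w i)" for k
  have "0 \<le> BR" using BR norm_ge_zero order_trans by blast
  then have "0 \<le> BJ" using \<open>0 \<le> BF\<close> by (simp add: BJ_def)
  have norm_j: "norm (j i) \<le> BJ" if "i < m" for i
  proof -
    have "norm (j i) \<le> n * n * norm (matrix_inv (R x)) * norm (Fq x i)"
      unfolding j_def Jrows_def n_def by (rule norm_vector_matrix_mult_le)
    also have "\<dots> \<le> n * n * BR * BF"
      using BF[of i] BR that \<open>0 \<le> BR\<close> by (intro mult_mono) (auto simp: m_def n_def)
    finally show ?thesis by (simp add: BJ_def power2_eq_square)
  qed
  have abs_cD: "\<bar>gs_cD ms j i k\<bar> \<le> (1 + real m) * BJ" if "i < m" for i k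
  proof -
    have "\<bar>gs_cD ms j i k\<bar> \<le> (1 + real i) * norm (j i)" by (rule abs_gs_cD_le)
    also have "\<dots> \<le> (1 + real m) * BJ" using that norm_j \<open>0 \<le> BJ\<close> by (intro mult_mono) auto
    finally show ?thesis .
  qed
  have abs_w: "\<bar>w i\<bar> \<le> real m * (BL * \<rho>)" if "i < m" for i
    unfolding w_def using BL residual that \<open>0 \<le> BL\<close> by (intro abs_sum_mult_le) (auto simp: m_def)
  have abs_z: "\<bar>z k\<bar> \<le> real m * ((1 + real m) * BJ * (real m * (BL * \<rho>)))" for k
    unfolding z_def using abs_cD abs_w \<open>0 \<le> BJ\<close> by (intro abs_sum_mult_le) auto
  have "norm (\<Sum>k<m. z k *\<^sub>R gs_hat j k) \<le> (\<Sum>k<m. \<bar>z k\<bar>)"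
    by (intro order_trans[OF norm_sum sum_mono]) (simp add: mult_left_le[OF norm_gs_hat_le_1 abs_ge_zero])
  also have "\<dots> \<le> real m * (real m * ((1 + real m) * BJ * (real m * (BL * \<rho>))))"
    using sum_mono[of "{..<m}", OF abs_z] by simp
  finally have norm_sum: "norm (\<Sum>k<m. z k *\<^sub>R gs_hat j k) \<le> real m * (real m * ((1 + real m) * BJ * (real m * (BL * \<rho>))))" .
  have "norm (pik_u ms ft Fq R r L x) \<le> n * n * norm (matrix_inv (R x)) * norm (\<Sum>k<m. z k *\<^sub>R gs_hat j k)"
    unfolding pik_u_def Let_def z_def w_def j_def m_def n_def by (rule norm_matrix_vector_mult_le)
  also have "\<dots> \<le> n * n * BR * (real m * (real m * ((1 + real m) * BJ * (real m * (BL * \<rho>)))))"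
    using BR norm_sum \<open>0 \<le> BR\<close> by (intro mult_mono) (auto simp: n_def)
  finally show ?thesis by (simp add: m_def n_def BJ_def power2_eq_square power3_eq_cube algebra_simps)
qed

lemma pik_u_linear_growth:
  fixes Fq :: "real \<times> (real^'n) \<Rightarrow> nat \<Rightarrow> real^'n" and R :: "real \<times> (real^'n) \<Rightarrow> real^'n^'n"
  assumes r'_lin: "\<exists>\<gamma> c. \<gamma> \<ge> 0 \<and> c \<ge> 0 \<and>
        (\<forall>t q. sqrt (\<Sum>i<sum_list ms. (r (t, q) i - ft (t, q) i)\<^sup>2) \<le> \<gamma> * norm q + c)"
    and Fq_bdd: "\<exists>B. \<forall>x. \<forall>i<sum_list ms. norm (Fq x i) \<le> B"
    and Rinv_bdd: "\<exists>B. \<forall>x. norm (matrix_inv (R x)) \<le> B"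
    and L_bdd: "\<exists>B. \<forall>x. \<forall>i<sum_list ms. \<forall>k<sum_list ms. \<bar>L x i k\<bar> \<le> B"
  obtains M where "0 < M" "\<And>t q. norm (pik_u ms ft Fq R r L (t, q)) \<le> M * (1 + norm q)"
proof -
  obtain \<gamma> c where "0 \<le> \<gamma>" "0 \<le> c"
    and r'_le: "\<And>t q. sqrt (\<Sum>i<sum_list ms. (r (t, q) i - ft (t, q) i)\<^sup>2) \<le> \<gamma> * norm q + c"
    using r'_lin by blast
  obtain BF where BF: "\<And>x i. i < sum_list ms \<Longrightarrow> norm (Fq x i) \<le> BF" using Fq_bdd by blast
  obtain BR where BR: "\<And>x. norm (matrix_inv (R x)) \<le> BR" using Rinv_bdd by blast
  obtain BL where BL: "\<And>x i k. i < sum_list ms \<Longrightarrow> k < sum_list ms \<Longrightarrow> \<bar>L x i k\<bar> \<le> BL"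
    using L_bdd by blast
  define K where "K = (real CARD('n) ^ 2 * BR) ^ 2 * max 0 BF * max 0 BL *
    real (sum_list ms) ^ 3 * (1 + real (sum_list ms))"
  have "0 \<le> K" unfolding K_def by simp
  show thesis
  proof (rule that[of "K * (\<gamma> + c) + 1"])
    have "0 \<le> K * (\<gamma> + c)" using \<open>0 \<le> K\<close> \<open>0 \<le> \<gamma>\<close> \<open>0 \<le> c\<close> by simp
    then show "0 < K * (\<gamma> + c) + 1" by linarith
    fix t q
    have "norm (pik_u ms ft Fq R r L (t, q)) \<le> K * (\<gamma> * norm q + c)"
      unfolding K_def
    proof (rule norm_pik_u_le)
      show "norm (Fq (t, q) i) \<le> max 0 BF" if "i < sum_list ms" for i
        using BF[OF that] by (rule max.coboundedI2)
      show "\<bar>L (t, q) i k\<bar> \<le> max 0 BL" if "i < sum_list ms" "k < sum_list ms" for i k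
        using BL[OF that] by (rule max.coboundedI2)
      show "\<bar>r (t, q) i - ft (t, q) i\<bar> \<le> \<gamma> * norm q + c" if "i < sum_list ms" for i
        using order_trans[OF abs_le_sqrt_sum_squares[OF that] r'_le] .
    qed (use BR \<open>0 \<le> \<gamma>\<close> \<open>0 \<le> c\<close> in simp_all)
    also have "\<dots> \<le> K * ((\<gamma> + c) * (1 + norm q))"
      using \<open>0 \<le> K\<close> \<open>0 \<le> \<gamma>\<close> \<open>0 \<le> c\<close> by (intro mult_left_mono) (simp_all add: algebra_simps)
    also have "\<dots> \<le> (K * (\<gamma> + c) + 1) * (1 + norm q)"
      by (simp add: algebra_simps)
    finally show "norm (pik_u ms ft Fq R r L (t, q)) \<le> (K * (\<gamma> + c) + 1) * (1 + norm q)" .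
  qed
qed

theorem lemma13:
  fixes ms :: "nat list"
    and ft :: "real \<times> (real^'n) \<Rightarrow> nat \<Rightarrow> real"
    and Fq :: "real \<times> (real^'n) \<Rightarrow> nat \<Rightarrow> real^'n"
    and R :: "real \<times> (real^'n) \<Rightarrow> real^'n^'n"
    and r :: "real \<times> (real^'n) \<Rightarrow> nat \<Rightarrow> real"
    and L :: "real \<times> (real^'n) \<Rightarrow> nat \<Rightarrow> nat \<Rightarrow> real"
    and t0 :: real and q0 :: "real^'n"
  assumes l_ge2: "length ms \<ge> 2"
    and ms_pos: "\<forall>a<length ms. ms ! a \<ge> 1"
    and m_le_n: "sum_list ms \<le> CARD('n)"
    and R_inv: "\<forall>x. invertible (R x)"
    and L_lower: "\<forall>x i k. i < sum_list ms \<and> k < sum_list ms \<and> blk ms i < blk ms k \<longrightarrow> L x i k = 0"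
    and r'_lin: "\<exists>\<gamma> c. \<gamma> \<ge> 0 \<and> c \<ge> 0 \<and>
        (\<forall>t q. sqrt (\<Sum>i<sum_list ms. (r (t, q) i - ft (t, q) i)\<^sup>2) \<le> \<gamma> * norm q + c)"
    and Fq_bdd: "\<exists>B. \<forall>x. \<forall>i<sum_list ms. norm (Fq x i) \<le> B"
    and Rinv_bdd: "\<exists>B. \<forall>x. norm (matrix_inv (R x)) \<le> B"
    and L_bdd: "\<exists>B. \<forall>x. \<forall>i<sum_list ms. \<forall>k<sum_list ms. \<bar>L x i k\<bar> \<le> B"
  shows "\<exists>q. krasovskii_solution (pik_u ms ft Fq R r L) t0 q0 q"
proof -
  obtain M where "0 < M" "\<And>t q. norm (pik_u ms ft Fq R r L (t, q)) \<le> M * (1 + norm q)"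
    using pik_u_linear_growth[OF r'_lin Fq_bdd Rinv_bdd L_bdd] by blast
  then show ?thesis by (rule krasovskii_solution_exists_linear_growth)
qed

end
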